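(* Let $\mathcal{H}$ be a separable Hilbert space, let $J$ be a finite or countably infinite index set, and let $(\rho_j)_{j\in J}$ be density operators on $\mathcal{H}$. Let $f:(0,1]^J\to\mathbb{R}$ be an evaluation function (defined in the context). Suppose the instrument $(\mathcal{I}_\omega)_{\omega\in J\cup\{?\}}$ is an unambiguous discrimination measurement between $(\rho_j)_{j\in J}$ that is optimal with respect to $f$, and suppose that $\operatorname{tr}[\mathcal{I}_j\rho_j]<1$ for all $j\in J$. Then the states $$\left(\frac{\mathcal{I}_?\rho_j}{\operatorname{tr}[\mathcal{I}_?\rho_j]}\right)_{j\in J}$$ (the post-measurement states conditioned on the inconclusive outcome $?$) are not distinguishable.
   Context: States are density operators $\rho$ on $\mathcal{H}$: trace-class operators with $\rho\geq 0$ and $\operatorname{tr}\rho=1$; $\mathfrak{T}(\mathcal{H})$ denotes the Banach space of trace-class operators. An instrument with countable outcome set $\Omega$ is a family $(\mathcal{I}_\omega)_{\omega\in\Omega}$ of trace-norm-bounded linear maps $\mathcal{I}_\omega:\mathfrak{T}(\mathcal{H})\to\mathfrak{T}(\mathcal{H})$ such that each $\mathcal{I}_\omega$ is completely positive (i.e. $\mathcal{I}_\omega\otimes\mathrm{id}_{\mathbb{C}^{n\times n}}$ is positive for all $n\in\mathbb{N}$) and $\operatorname{tr}[(\sum_\omega\mathcal{I}_\omega)\rho]=\operatorname{tr}\rho$ for all $\rho\in\mathfrak{T}(\mathcal{H})$. An unambiguous discrimination measurement between states $(\rho_j)_{j\in J}$ is an instrument $(\mathcal{I}_\omega)_{\omega\in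 J\cup\{?\}}$ (with $?$ an extra "inconclusive" outcome not in $J$) such that for all $j\neq k$ in $J$, $\operatorname{tr}[\mathcal{I}_j\rho_k]=0$, and for all $j\in J$, $\operatorname{tr}[\mathcal{I}_j\rho_j]>0$; the numbers $\operatorname{tr}[\mathcal{I}_j\rho_j]$ are the success probabilities. States $(\rho_j)_{j\in J}$ are distinguishable if at least one unambiguous discrimination measurement between them exists. An evaluation function is a function $f:(0,1]^J\to\mathbb{R}$ such that for all $(x_j),(y_j)\in(0,1]^J$, if $x_j>y_j$ for every $j\in J$ then $f((x_j))>f((y_j))$. An unambiguous discrimination measurement between $(\rho_j)_{j\in J}$ is optimal with respect to $f$ if no other unambiguous discrimination measurement $(\mathcal{I}'_\omega)$ between $(\rho_j)_{j\in J}$ satisfies $f((\operatorname{tr}[\mathcal{I}'_j\rho_j])_j)>f((\operatorname{tr}[\mathcal{I}_j\rho_j])_j)$. *)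

theory Defs
  imports "HOL-Analysis.Analysis" "HOL-Library.Complex_Order" "HOL-Library.FuncSet"
begin

text \<open>
  Model: a separable Hilbert space is (up to unitary isomorphism) l2(X) for a countable
  index type X.  Operators are represented by their matrices (kernels) with respect to
  the standard orthonormal basis: T :: X \<Rightarrow> X \<Rightarrow> complex.
\<close>

type_synonym 'x kern = "'x \<Rightarrow> 'x \<Rightarrow> complex"

definition ell2 :: "('x \<Rightarrow> complex) \<Rightarrow> bool" where
  "ell2 v \<longleftrightarrow> (\<lambda>a. (cmod (v a))\<^sup>2) summable_on UNIV"

definition cinner :: "('x \<Rightarrow> complex) \<Rightarrow> ('x \<Rightarrow> complex) \<Rightarrow> complex" where
  "cinner v w = (\<Sum>\<^sub>\<infinity>a. cnj (v a) * w a)"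

definition kform :: "'x kern \<Rightarrow> ('x \<Rightarrow> complex) \<Rightarrow> ('x \<Rightarrow> complex) \<Rightarrow> complex" where
  "kform T f e = (\<Sum>\<^sub>\<infinity>(a,b). cnj (f a) * T a b * e b)"

definition orthonormal_sys :: "nat \<Rightarrow> (nat \<Rightarrow> 'x \<Rightarrow> complex) \<Rightarrow> bool" where
  "orthonormal_sys m e \<longleftrightarrow> (\<forall>k<m. ell2 (e k)) \<and>
     (\<forall>k<m. \<forall>l<m. cinner (e k) (e l) = (if k = l then 1 else 0))"

definition trnorm_set :: "'x kern \<Rightarrow> real set" where
  "trnorm_set T = {(\<Sum>k<m. cmod (kform T (f k) (e k))) | m f e.
                     orthonormal_sys m f \<and> orthonormal_sys m e}"

definition trnorm :: "'x kern \<Rightarrow> real" where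
  "trnorm T = Sup (trnorm_set T)"

text \<open>Trace-class operator: a bounded operator (its form is absolutely convergent on l2)
  with finite trace norm.\<close>
definition trace_class :: "'x kern \<Rightarrow> bool" where
  "trace_class T \<longleftrightarrow>
     (\<forall>f e. ell2 f \<and> ell2 e \<longrightarrow> Infinite_Sum.abs_summable_on (\<lambda>(a,b). cnj (f a) * T a b * e b) (UNIV :: ('x \<times> 'x) set)) \<and>
     bdd_above (trnorm_set T)"

definition tr :: "'x kern \<Rightarrow> complex" where
  "tr T = (\<Sum>\<^sub>\<infinity>a. T a a)"

definition positive_op :: "'x kern \<Rightarrow> bool" where
  "positive_op T \<longleftrightarrow> (\<forall>v. ell2 v \<longrightarrow> 0 \<le> kform T v v)"

definition density_op :: "'x kern \<Rightarrow> bool" where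
  "density_op \<rho> \<longleftrightarrow> trace_class \<rho> \<and> positive_op \<rho> \<and> tr \<rho> = 1"

definition tc_bounded_linear :: "('x kern \<Rightarrow> 'x kern) \<Rightarrow> bool" where
  "tc_bounded_linear \<Phi> \<longleftrightarrow>
     (\<forall>X. trace_class X \<longrightarrow> trace_class (\<Phi> X)) \<and>
     (\<forall>X Y (a::complex) b. trace_class X \<and> trace_class Y \<longrightarrow>
        \<Phi> (\<lambda>x y. a * X x y + b * Y x y) = (\<lambda>x y. a * \<Phi> X x y + b * \<Phi> Y x y)) \<and>
     (\<exists>C. \<forall>X. trace_class X \<longrightarrow> trnorm (\<Phi> X) \<le> C * trnorm X)"

text \<open>Amplification \<Phi> \<otimes> id on T(H \<otimes> C^n) = T(l2(X \<times> {..<n})), acting blockwise.\<close>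
definition ampl :: "nat \<Rightarrow> ('x kern \<Rightarrow> 'x kern) \<Rightarrow> ('x \<times> nat) kern \<Rightarrow> ('x \<times> nat) kern" where
  "ampl n \<Phi> X = (\<lambda>(a,k) (b,l). if k < n \<and> l < n
                    then \<Phi> (\<lambda>a' b'. X (a',k) (b',l)) a b else 0)"

definition supported_on :: "nat \<Rightarrow> ('x \<times> nat) kern \<Rightarrow> bool" where
  "supported_on n X \<longleftrightarrow> (\<forall>p q. n \<le> snd p \<or> n \<le> snd q \<longrightarrow> X p q = 0)"

definition completely_positive :: "('x kern \<Rightarrow> 'x kern) \<Rightarrow> bool" where
  "completely_positive \<Phi> \<longleftrightarrow>
     (\<forall>n::nat. \<forall>X. trace_class X \<and> supported_on n X \<and> positive_op X
                    \<longrightarrow> positive_op (ampl n \<Phi> X))"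

definition tn_has_sum :: "('o \<Rightarrow> 'x kern) \<Rightarrow> 'o set \<Rightarrow> 'x kern \<Rightarrow> bool" where
  "tn_has_sum F \<Omega> S \<longleftrightarrow>
     (\<forall>\<epsilon>>0. \<exists>F0. finite F0 \<and> F0 \<subseteq> \<Omega> \<and>
        (\<forall>G. finite G \<and> F0 \<subseteq> G \<and> G \<subseteq> \<Omega> \<longrightarrow> trnorm (\<lambda>a b. (\<Sum>\<omega>\<in>G. F \<omega> a b) - S a b) < \<epsilon>))"

definition instrument :: "'o set \<Rightarrow> ('o \<Rightarrow> 'x kern \<Rightarrow> 'x kern) \<Rightarrow> bool" where
  "instrument \<Omega> \<I> \<longleftrightarrow> countable \<Omega> \<and>
     (\<forall>\<omega>\<in>\<Omega>. tc_bounded_linear (\<I> \<omega>) \<and> completely_positive (\<I> \<omega>)) \<and>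
     (\<forall>\<rho>. trace_class \<rho> \<longrightarrow>
        (\<exists>S. trace_class S \<and> tn_has_sum (\<lambda>\<omega>. \<I> \<omega> \<rho>) \<Omega> S \<and> tr S = tr \<rho>))"

text \<open>Outcomes J \<union> {?} are encoded as 'j option: Some j for j \<in> J, None for ?.\<close>
definition unamb_discr :: "'j set \<Rightarrow> ('j \<Rightarrow> 'x kern) \<Rightarrow> ('j option \<Rightarrow> 'x kern \<Rightarrow> 'x kern) \<Rightarrow> bool" where
  "unamb_discr J \<rho> \<I> \<longleftrightarrow> instrument (insert None (Some ` J)) \<I> \<and>
     (\<forall>j\<in>J. \<forall>k\<in>J. j \<noteq> k \<longrightarrow> tr (\<I> (Some j) (\<rho> k)) = 0) \<and>
     (\<forall>j\<in>J. 0 < tr (\<I> (Some j) (\<rho> j)))"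

definition distinguishable :: "'j set \<Rightarrow> ('j \<Rightarrow> 'x kern) \<Rightarrow> bool" where
  "distinguishable J \<rho> \<longleftrightarrow> (\<exists>\<I>. unamb_discr J \<rho> \<I>)"

definition success_probs :: "'j set \<Rightarrow> ('j \<Rightarrow> 'x kern) \<Rightarrow> ('j option \<Rightarrow> 'x kern \<Rightarrow> 'x kern) \<Rightarrow> 'j \<Rightarrow> real" where
  "success_probs J \<rho> \<I> = restrict (\<lambda>j. Re (tr (\<I> (Some j) (\<rho> j)))) J"

definition evaluation_function :: "'j set \<Rightarrow> (('j \<Rightarrow> real) \<Rightarrow> real) \<Rightarrow> bool" where
  "evaluation_function J f \<longleftrightarrow>
     (\<forall>x\<in>PiE J (\<lambda>_. {0<..1}). \<forall>y\<in>PiE J (\<lambda>_. {0<..1}).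
        (\<forall>j\<in>J. x j > y j) \<longrightarrow> f x > f y)"

definition optimal_udm :: "'j set \<Rightarrow> ('j \<Rightarrow> 'x kern) \<Rightarrow> (('j \<Rightarrow> real) \<Rightarrow> real)
                           \<Rightarrow> ('j option \<Rightarrow> 'x kern \<Rightarrow> 'x kern) \<Rightarrow> bool" where
  "optimal_udm J \<rho> f \<I> \<longleftrightarrow> unamb_discr J \<rho> \<I> \<and>
     \<not> (\<exists>\<I>'. unamb_discr J \<rho> \<I>' \<and> f (success_probs J \<rho> \<I>') > f (success_probs J \<rho> \<I>))"

end

(*
  Suppose the states I_? rho_j / tr[I_? rho_j] left by the inconclusive outcome of an optimal
  unambiguous discrimination I could themselves be discriminated unambiguously by some J.
  Then run I and, on the outcome ?, run J.  Outcome j of the combined procedure has probability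
  tr[I_j rho_k] + tr[I_? rho_k] tr[J_j sigma_k] on rho_k, which vanishes for j ~= k, so the
  procedure is again unambiguous; and since tr[I_? rho_j] = 1 - tr[I_j rho_j] > 0, every
  success probability strictly increases.  A strictly monotone evaluation function then rates
  the combined procedure higher, contradicting optimality.

  The combined procedure is realised as a measure-and-prepare instrument: each outcome
  prepares one fixed pure state, weighted by its probability.  It is completely positive because
  its outcome probabilities are positive functionals of the input state.
*)
theory Submission
  imports Defs
begin

section \<open>Square-summable vectors\<close>

lemma real_mult_le_sq: fixes x y :: real assumes "x \<ge> 0" "y \<ge> 0" shows "x * y \<le> x\<^sup>2 + y\<^sup>2"
proof -
  have "0 \<le> (x - y)\<^sup>2" by simp
  then have "2 * (x * y) \<le> x\<^sup>2 + y\<^sup>2" by (simp add: power2_diff)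
  moreover have "0 \<le> x * y" using assms by simp
  ultimately show ?thesis by linarith
qed

lemma real_sum_sq_le: fixes x y :: real shows "(x + y)\<^sup>2 \<le> 2 * x\<^sup>2 + 2 * y\<^sup>2"
proof -
  have "0 \<le> (x - y)\<^sup>2" by simp
  then show ?thesis by (simp add: power2_diff power2_sum)
qed

lemma cmod_mult_le_sq: "cmod a * cmod b \<le> (cmod a)\<^sup>2 + (cmod b)\<^sup>2"
  by (rule real_mult_le_sq) auto

lemma ell2_summable_prod:
  assumes "ell2 v" "ell2 w"
  shows "(\<lambda>a. cnj (v a) * w a) summable_on A"
proof -
  have "(\<lambda>a. (cmod (v a))\<^sup>2 + (cmod (w a))\<^sup>2) summable_on UNIV"
    using assms unfolding ell2_def by (intro summable_on_add)
  then have "(\<lambda>a. (cmod (v a))\<^sup>2 + (cmod (w a))\<^sup>2) summable_on A"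
    using summable_on_subset by blast
  then have "(\<lambda>a. norm (cnj (v a) * w a)) summable_on A"
    by (rule Infinite_Sum.abs_summable_on_comparison_test'[where f="\<lambda>a. cnj (v a) * w a"]) (simp add: norm_mult cmod_mult_le_sq)
  then show ?thesis using summable_on_iff_abs_summable_on_complex by blast
qed

lemma ell2_add: assumes "ell2 v" "ell2 w" shows "ell2 (\<lambda>a. v a + w a)"
proof -
  have "(\<lambda>a. 2*(cmod (v a))\<^sup>2 + 2*(cmod (w a))\<^sup>2) summable_on UNIV"
    using assms unfolding ell2_def by (intro summable_on_add summable_on_cmult_right)
  then show ?thesis unfolding ell2_def
  proof (rule summable_on_comparison_test)
    fix a
    have "cmod (v a + w a) \<le> cmod (v a) + cmod (w a)" by (rule norm_triangle_ineq)
    then have "(cmod (v a + w a))\<^sup>2 \<le> (cmod (v a) + cmod (w a))\<^sup>2"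
      by (simp add: power_mono)
    also have "\<dots> \<le> 2*(cmod (v a))\<^sup>2 + 2*(cmod (w a))\<^sup>2"
      by (rule real_sum_sq_le)
    finally show "(cmod (v a + w a))\<^sup>2 \<le> 2*(cmod (v a))\<^sup>2 + 2*(cmod (w a))\<^sup>2" .
  qed simp
qed

lemma ell2_scale: assumes "ell2 v" shows "ell2 (\<lambda>a. c * v a)"
  using assms unfolding ell2_def
  by (simp add: norm_mult power_mult_distrib summable_on_cmult_right)

lemma ell2_zero: "ell2 (\<lambda>a. 0)" unfolding ell2_def by simp

lemma ell2_sum: assumes "finite I" "\<And>i. i \<in> I \<Longrightarrow> ell2 (v i)"
  shows "ell2 (\<lambda>a. \<Sum>i\<in>I. c i * v i a)"
  using assms
proof (induction I rule: finite_induct)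
  case empty then show ?case by (simp add: ell2_zero)
next
  case (insert x F)
  then show ?case by (simp add: ell2_add ell2_scale)
qed

lemma ell2_finite_support: assumes "finite {a. v a \<noteq> 0}" shows "ell2 v"
  unfolding ell2_def by (rule finite_nonzero_values_imp_summable_on) (use assms in \<open>auto elim: rev_finite_subset\<close>)

lemma ell2_diff: assumes "ell2 v" "ell2 w" shows "ell2 (\<lambda>a. v a - w a)"
  using ell2_add[OF assms(1) ell2_scale[OF assms(2), of "-1"]] by simp

lemma infsum_sum:
  fixes g :: "'i \<Rightarrow> 'a \<Rightarrow> complex"
  assumes "finite I" "\<And>i. i \<in> I \<Longrightarrow> g i summable_on A"
  shows "infsum (\<lambda>a. \<Sum>i\<in>I. g i a) A = (\<Sum>i\<in>I. infsum (g i) A)"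
    and "(\<lambda>a. \<Sum>i\<in>I. g i a) summable_on A"
  using assms
proof (induction I rule: finite_induct)
  case empty
  { case 1 then show ?case by simp next case 2 then show ?case by simp }
next
  case (insert x F)
  { case 1 then show ?case using insert by (simp add: infsum_add summable_on_add)
  next case 2 then show ?case using insert by (simp add: summable_on_add) }
qed

lemma cinner_sum_right:
  assumes "finite I" "ell2 u" "\<And>i. i \<in> I \<Longrightarrow> ell2 (v i)"
  shows "cinner u (\<lambda>a. \<Sum>i\<in>I. c i * v i a) = (\<Sum>i\<in>I. c i * cinner u (v i))"
proof -
  have "cinner u (\<lambda>a. \<Sum>i\<in>I. c i * v i a) = (\<Sum>\<^sub>\<infinity>a. \<Sum>i\<in>I. c i * (cnj (u a) * v i a))"
    unfolding cinner_def by (simp add: sum_distrib_left algebra_simps)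
  also have "\<dots> = (\<Sum>i\<in>I. \<Sum>\<^sub>\<infinity>a. c i * (cnj (u a) * v i a))"
    by (rule infsum_sum(1)) (use assms in \<open>auto intro!: summable_on_cmult_right ell2_summable_prod\<close>)
  also have "\<dots> = (\<Sum>i\<in>I. c i * cinner u (v i))"
    unfolding cinner_def by (simp add: infsum_cmult_right')
  finally show ?thesis .
qed

lemma cinner_sum_left:
  assumes "finite I" "ell2 u" "\<And>i. i \<in> I \<Longrightarrow> ell2 (v i)"
  shows "cinner (\<lambda>a. \<Sum>i\<in>I. c i * v i a) u = (\<Sum>i\<in>I. cnj (c i) * cinner (v i) u)"
proof -
  have "cinner (\<lambda>a. \<Sum>i\<in>I. c i * v i a) u = (\<Sum>\<^sub>\<infinity>a. \<Sum>i\<in>I. cnj (c i) * (cnj (v i a) * u a))"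
    unfolding cinner_def by (simp add: cnj_sum sum_distrib_right mult.assoc)
  also have "\<dots> = (\<Sum>i\<in>I. \<Sum>\<^sub>\<infinity>a. cnj (c i) * (cnj (v i a) * u a))"
    by (rule infsum_sum(1)) (use assms in \<open>auto intro!: summable_on_cmult_right ell2_summable_prod\<close>)
  also have "\<dots> = (\<Sum>i\<in>I. cnj (c i) * cinner (v i) u)"
    unfolding cinner_def by (simp add: infsum_cmult_right')
  finally show ?thesis .
qed

lemma cinner_diff_right:
  assumes "ell2 u" "ell2 v" "ell2 w"
  shows "cinner u (\<lambda>a. v a - w a) = cinner u v - cinner u w"
proof -
  have "cinner u (\<lambda>a. v a - w a) = (\<Sum>\<^sub>\<infinity>a. cnj (u a) * v a + (- (cnj (u a) * w a)))"
    unfolding cinner_def by (simp add: algebra_simps)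
  also have "\<dots> = cinner u v + (\<Sum>\<^sub>\<infinity>a. - (cnj (u a) * w a))"
    unfolding cinner_def
    by (rule infsum_add) (use assms in \<open>auto intro!: ell2_summable_prod summable_on_uminus[THEN iffD2]\<close>)
  also have "\<dots> = cinner u v - cinner u w"
    unfolding cinner_def by (simp add: infsum_uminus)
  finally show ?thesis .
qed

lemma cinner_diff_left:
  assumes "ell2 u" "ell2 v" "ell2 w"
  shows "cinner (\<lambda>a. v a - w a) u = cinner v u - cinner w u"
proof -
  have "cinner (\<lambda>a. v a - w a) u = (\<Sum>\<^sub>\<infinity>a. cnj (v a) * u a + (- (cnj (w a) * u a)))"
    unfolding cinner_def by (simp add: algebra_simps)
  also have "\<dots> = cinner v u + (\<Sum>\<^sub>\<infinity>a. - (cnj (w a) * u a))"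
    unfolding cinner_def
    by (rule infsum_add) (use assms in \<open>auto intro!: ell2_summable_prod summable_on_uminus[THEN iffD2]\<close>)
  also have "\<dots> = cinner v u - cinner w u"
    unfolding cinner_def by (simp add: infsum_uminus)
  finally show ?thesis .
qed

lemma cinner_cnj: "cinner v u = cnj (cinner u v)"
  unfolding cinner_def by (subst infsum_cnj[symmetric]) (simp add: mult.commute)

lemma cinner_self_Re_nonneg: assumes "ell2 u" shows "0 \<le> Re (cinner u u)"
proof -
  have s: "(\<lambda>a. cnj (u a) * u a) summable_on UNIV" by (rule ell2_summable_prod[OF assms assms])
  have "Re (cinner u u) = (\<Sum>\<^sub>\<infinity>a. Re (cnj (u a) * u a))"
    unfolding cinner_def using infsum_Re[OF s] by simp
  also have "\<dots> \<ge> 0" by (rule infsum_nonneg) auto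
  finally show ?thesis .
qed

lemma bessel_inequality:
  assumes "ell2 u" "orthonormal_sys M f"
  shows "(\<Sum>m<M. (cmod (cinner (f m) u))\<^sup>2) \<le> Re (cinner u u)"
proof -
  define c where "c m = cinner (f m) u" for m
  define s where "s = (\<lambda>a. \<Sum>m<M. c m * f m a)"
  have ef: "\<And>m. m < M \<Longrightarrow> ell2 (f m)" using assms(2) by (simp add: orthonormal_sys_def)
  have on: "\<And>k l. k < M \<Longrightarrow> l < M \<Longrightarrow> cinner (f k) (f l) = (if k = l then 1 else 0)"
    using assms(2) by (simp add: orthonormal_sys_def)
  have es: "ell2 s" unfolding s_def by (rule ell2_sum) (auto simp: ef)
  have us: "cinner u s = (\<Sum>m<M. c m * cnj (c m))"
    unfolding s_def by (subst cinner_sum_right) (auto simp: ef assms c_def cinner_cnj[of u])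
  have su: "cinner s u = (\<Sum>m<M. cnj (c m) * c m)"
    unfolding s_def by (subst cinner_sum_left) (auto simp: ef assms c_def)
  have fs: "cinner (f k) s = c k" if "k < M" for k
  proof -
    have "cinner (f k) s = (\<Sum>m<M. c m * cinner (f k) (f m))"
      unfolding s_def by (rule cinner_sum_right) (auto simp: ef that)
    also have "\<dots> = (\<Sum>m<M. if m = k then c m else 0)"
      by (rule sum.cong) (auto simp: on that)
    also have "\<dots> = c k" using that by simp
    finally show ?thesis .
  qed
  have "cinner s s = (\<Sum>m<M. cnj (c m) * cinner (f m) s)"
    by (subst (1) s_def, rule cinner_sum_left) (auto simp: ef es)
  also have "\<dots> = (\<Sum>m<M. cnj (c m) * c m)"
    by (rule sum.cong) (simp_all add: fs)
  finally have ss: "cinner s s = (\<Sum>m<M. cnj (c m) * c m)" .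
  have "0 \<le> Re (cinner (\<lambda>a. u a - s a) (\<lambda>a. u a - s a))"
    by (rule cinner_self_Re_nonneg) (rule ell2_diff[OF assms(1) es])
  also have "cinner (\<lambda>a. u a - s a) (\<lambda>a. u a - s a) = cinner u u - cinner u s - (cinner s u - cinner s s)"
    using assms(1) es
    by (simp add: cinner_diff_left cinner_diff_right ell2_diff)
  also have "\<dots> = cinner u u - (\<Sum>m<M. cnj (c m) * c m)"
    by (simp add: us su ss mult.commute)
  finally have "0 \<le> Re (cinner u u) - (\<Sum>m<M. Re (cnj (c m) * c m))" by simp
  moreover have "\<And>m. Re (cnj (c m) * c m) = (cmod (c m))\<^sup>2"
    by (metis complex_norm_square mult.commute Re_complex_of_real)
  ultimately show ?thesis by (simp add: c_def)
qed

section \<open>Sesquilinear forms of kernels\<close>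

definition form_summable :: "'x kern \<Rightarrow> bool" where
  "form_summable Z \<longleftrightarrow> (\<forall>f e. ell2 f \<and> ell2 e \<longrightarrow> (\<lambda>(a,b). cnj (f a) * Z a b * e b) summable_on UNIV)"

lemma form_summableD: "form_summable Z \<Longrightarrow> ell2 f \<Longrightarrow> ell2 e \<Longrightarrow> (\<lambda>(a,b). cnj (f a) * Z a b * e b) summable_on UNIV"
  by (simp add: form_summable_def)

lemma trace_class_form_summable: "trace_class Z \<Longrightarrow> form_summable Z"
  unfolding trace_class_def form_summable_def using summable_on_iff_abs_summable_on_complex by blast

lemma kform_add_right:
  assumes "form_summable Z" "ell2 f" "ell2 e" "ell2 e'"
  shows "kform Z f (\<lambda>b. e b + e' b) = kform Z f e + kform Z f e'"
proof -
  have "(\<lambda>(a,b). cnj (f a) * Z a b * (e b + e' b)) =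
        (\<lambda>x. (\<lambda>(a,b). cnj (f a) * Z a b * e b) x + (\<lambda>(a,b). cnj (f a) * Z a b * e' b) x)"
    by (intro ext) (auto simp: algebra_simps split: prod.splits)
  then show ?thesis unfolding kform_def
    by (simp only:) (rule infsum_add; use assms form_summableD in blast)
qed

lemma kform_add_left:
  assumes "form_summable Z" "ell2 f" "ell2 f'" "ell2 e"
  shows "kform Z (\<lambda>a. f a + f' a) e = kform Z f e + kform Z f' e"
proof -
  have "(\<lambda>(a,b). cnj (f a + f' a) * Z a b * e b) =
        (\<lambda>x. (\<lambda>(a,b). cnj (f a) * Z a b * e b) x + (\<lambda>(a,b). cnj (f' a) * Z a b * e b) x)"
    by (intro ext) (auto simp: algebra_simps split: prod.splits)
  then show ?thesis unfolding kform_def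
    by (simp only:) (rule infsum_add; use assms form_summableD in blast)
qed

lemma kform_scale_right: "kform Z f (\<lambda>b. c * e b) = c * kform Z f e"
proof -
  have "(\<lambda>(a,b). cnj (f a) * Z a b * (c * e b)) = (\<lambda>x. c * (\<lambda>(a,b). cnj (f a) * Z a b * e b) x)"
    by (intro ext) (auto simp: algebra_simps split: prod.splits)
  then show ?thesis unfolding kform_def by (simp only: infsum_cmult_right')
qed

lemma kform_scale_left: "kform Z (\<lambda>a. c * f a) e = cnj c * kform Z f e"
proof -
  have "(\<lambda>(a,b). cnj (c * f a) * Z a b * e b) = (\<lambda>x. cnj c * (\<lambda>(a,b). cnj (f a) * Z a b * e b) x)"
    by (intro ext) (auto simp: algebra_simps split: prod.splits)
  then show ?thesis unfolding kform_def by (simp only: infsum_cmult_right')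
qed

lemma kform_kernel_add:
  assumes "form_summable Z" "form_summable Y" "ell2 f" "ell2 e"
  shows "kform (\<lambda>a b. Z a b + Y a b) f e = kform Z f e + kform Y f e"
proof -
  have "(\<lambda>(a,b). cnj (f a) * (Z a b + Y a b) * e b) =
        (\<lambda>x. (\<lambda>(a,b). cnj (f a) * Z a b * e b) x + (\<lambda>(a,b). cnj (f a) * Y a b * e b) x)"
    by (intro ext) (auto simp: algebra_simps split: prod.splits)
  then show ?thesis unfolding kform_def
    by (simp only:) (rule infsum_add; use assms form_summableD in blast)
qed

lemma kform_kernel_scale: "kform (\<lambda>a b. c * Z a b) f e = c * kform Z f e"
proof -
  have "(\<lambda>(a,b). cnj (f a) * (c * Z a b) * e b) = (\<lambda>x. c * (\<lambda>(a,b). cnj (f a) * Z a b * e b) x)"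
    by (intro ext) (auto simp: algebra_simps split: prod.splits)
  then show ?thesis unfolding kform_def by (simp only: infsum_cmult_right')
qed

lemma form_summable_add: fixes Z Y :: "'x kern" assumes "form_summable Z" "form_summable Y" shows "form_summable (\<lambda>a b. Z a b + Y a b)"
  unfolding form_summable_def
proof (intro allI impI)
  fix f e :: "'x \<Rightarrow> complex" assume "ell2 f \<and> ell2 e"
  then have "(\<lambda>x. (\<lambda>(a,b). cnj (f a) * Z a b * e b) x + (\<lambda>(a,b). cnj (f a) * Y a b * e b) x) summable_on UNIV"
    using assms form_summableD by (intro summable_on_add) blast+
  moreover have "(\<lambda>(a,b). cnj (f a) * (Z a b + Y a b) * e b) =
        (\<lambda>x. (\<lambda>(a,b). cnj (f a) * Z a b * e b) x + (\<lambda>(a,b). cnj (f a) * Y a b * e b) x)"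
    by (intro ext) (auto simp: algebra_simps split: prod.splits)
  ultimately show "(\<lambda>(a,b). cnj (f a) * (Z a b + Y a b) * e b) summable_on UNIV" by simp
qed

lemma form_summable_scale: fixes Z :: "'x kern" assumes "form_summable Z" shows "form_summable (\<lambda>a b. c * Z a b)"
  unfolding form_summable_def
proof (intro allI impI)
  fix f e :: "'x \<Rightarrow> complex" assume "ell2 f \<and> ell2 e"
  then have "(\<lambda>x. c * (\<lambda>(a,b). cnj (f a) * Z a b * e b) x) summable_on UNIV"
    using assms form_summableD by (intro summable_on_cmult_right) blast+
  moreover have "(\<lambda>(a,b). cnj (f a) * (c * Z a b) * e b) = (\<lambda>x. c * (\<lambda>(a,b). cnj (f a) * Z a b * e b) x)"
    by (intro ext) (auto simp: algebra_simps split: prod.splits)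
  ultimately show "(\<lambda>(a,b). cnj (f a) * (c * Z a b) * e b) summable_on UNIV" by simp
qed

lemma form_summable_zero: "form_summable (\<lambda>a b. 0)" unfolding form_summable_def by (simp add: case_prod_unfold)

lemma form_summable_sum: assumes "finite I" "\<And>i. i \<in> I \<Longrightarrow> form_summable (Z i)"
  shows "form_summable (\<lambda>a b. \<Sum>i\<in>I. c i * Z i a b)"
  using assms by (induction I rule: finite_induct) (auto simp: form_summable_zero form_summable_add form_summable_scale)

lemma kform_zero_right: "kform Z f (\<lambda>b. 0) = 0" unfolding kform_def by (simp add: case_prod_unfold)
lemma kform_zero_left: "kform Z (\<lambda>b. 0) e = 0" unfolding kform_def by (simp add: case_prod_unfold)
lemma kform_zero_kernel: "kform (\<lambda>a b. 0) f e = 0" unfolding kform_def by (simp add: case_prod_unfold)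

lemma kform_sum_right:
  assumes "finite I" "form_summable Z" "ell2 f" "\<And>i. i \<in> I \<Longrightarrow> ell2 (e i)"
  shows "kform Z f (\<lambda>b. \<Sum>i\<in>I. c i * e i b) = (\<Sum>i\<in>I. c i * kform Z f (e i))"
  using assms
proof (induction I rule: finite_induct)
  case empty then show ?case by (simp add: kform_zero_right)
next
  case (insert x F)
  have "kform Z f (\<lambda>b. \<Sum>i\<in>insert x F. c i * e i b) = kform Z f (\<lambda>b. c x * e x b + (\<Sum>i\<in>F. c i * e i b))"
    using insert by simp
  also have "\<dots> = kform Z f (\<lambda>b. c x * e x b) + kform Z f (\<lambda>b. \<Sum>i\<in>F. c i * e i b)"
    using insert by (intro kform_add_right) (auto intro: ell2_scale ell2_sum)
  finally show ?case using insert by (simp add: kform_scale_right)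
qed

lemma kform_sum_left:
  assumes "finite I" "form_summable Z" "ell2 e" "\<And>i. i \<in> I \<Longrightarrow> ell2 (f i)"
  shows "kform Z (\<lambda>a. \<Sum>i\<in>I. c i * f i a) e = (\<Sum>i\<in>I. cnj (c i) * kform Z (f i) e)"
  using assms
proof (induction I rule: finite_induct)
  case empty then show ?case by (simp add: kform_zero_left)
next
  case (insert x F)
  have "kform Z (\<lambda>a. \<Sum>i\<in>insert x F. c i * f i a) e = kform Z (\<lambda>a. c x * f x a + (\<Sum>i\<in>F. c i * f i a)) e"
    using insert by simp
  also have "\<dots> = kform Z (\<lambda>a. c x * f x a) e + kform Z (\<lambda>a. \<Sum>i\<in>F. c i * f i a) e"
    using insert by (intro kform_add_left) (auto intro: ell2_scale ell2_sum)
  finally show ?case using insert by (simp add: kform_scale_left)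
qed

lemma kform_kernel_sum:
  assumes "finite I" "\<And>i. i \<in> I \<Longrightarrow> form_summable (Z i)" "ell2 f" "ell2 e"
  shows "kform (\<lambda>a b. \<Sum>i\<in>I. c i * Z i a b) f e = (\<Sum>i\<in>I. c i * kform (Z i) f e)"
  using assms
proof (induction I rule: finite_induct)
  case empty then show ?case by (simp add: kform_zero_kernel)
next
  case (insert x F)
  have "kform (\<lambda>a b. \<Sum>i\<in>insert x F. c i * Z i a b) f e = kform (\<lambda>a b. c x * Z x a b + (\<Sum>i\<in>F. c i * Z i a b)) f e"
    using insert by simp
  also have "\<dots> = kform (\<lambda>a b. c x * Z x a b) f e + kform (\<lambda>a b. \<Sum>i\<in>F. c i * Z i a b) f e"
    using insert by (intro kform_kernel_add) (auto intro: form_summable_scale form_summable_sum)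
  finally show ?case using insert by (simp add: kform_kernel_scale)
qed

lemma kform_expand:
  assumes "form_summable Z" "ell2 f" "ell2 e"
  shows "kform Z (\<lambda>a. f a + t * e a) (\<lambda>b. f b + t * e b) =
    kform Z f f + t * kform Z f e + cnj t * kform Z e f + cnj t * t * kform Z e e"
proof -
  have te: "ell2 (\<lambda>a. t * e a)" by (rule ell2_scale[OF assms(3)])
  have ft: "ell2 (\<lambda>a. f a + t * e a)" using assms te by (intro ell2_add)
  have "kform Z (\<lambda>a. f a + t * e a) (\<lambda>b. f b + t * e b) =
     kform Z f (\<lambda>b. f b + t * e b) + kform Z (\<lambda>a. t * e a) (\<lambda>b. f b + t * e b)"
    by (rule kform_add_left[OF assms(1,2) te ft])
  also have "kform Z f (\<lambda>b. f b + t * e b) = kform Z f f + t * kform Z f e"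
    using assms te by (simp add: kform_add_right kform_scale_right)
  also have "kform Z (\<lambda>a. t * e a) (\<lambda>b. f b + t * e b) = cnj t * (kform Z e f + t * kform Z e e)"
    using assms te by (simp add: kform_add_right kform_scale_right kform_scale_left)
  finally show ?thesis by (simp add: algebra_simps)
qed

lemma complex_nonneg_iff: "0 \<le> (z::complex) \<longleftrightarrow> 0 \<le> Re z \<and> Im z = 0"
  by (simp add: less_eq_complex_def)

lemma kform_hermitian:
  assumes "form_summable Z" "positive_op Z" "ell2 f" "ell2 e"
  shows "kform Z e f = cnj (kform Z f e)"
proof -
  have P: "0 \<le> kform Z (\<lambda>a. f a + t * e a) (\<lambda>b. f b + t * e b)" for t
    using assms(2) unfolding positive_op_def using assms(3,4) by (simp add: ell2_add ell2_scale)
  have ff: "Im (kform Z f f) = 0" and ee: "Im (kform Z e e) = 0"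
    using assms(2-4) unfolding positive_op_def by (auto simp: complex_nonneg_iff)
  have Q: "0 \<le> kform Z f f + t * kform Z f e + cnj t * kform Z e f + cnj t * t * kform Z e e" for t
    using P[of t] by (simp only: kform_expand[OF assms(1,3,4)])
  have 1: "Im (kform Z f e) + Im (kform Z e f) = 0"
    using Q[of 1] ff ee by (simp add: complex_nonneg_iff)
  have 2: "Re (kform Z f e) - Re (kform Z e f) = 0"
    using Q[of \<i>] ff ee by (simp add: complex_nonneg_iff)
  show ?thesis using 1 2 by (simp add: complex_eq_iff)
qed

lemma kform_amgm:
  assumes "form_summable Z" "positive_op Z" "ell2 f" "ell2 e"
  shows "cmod (kform Z f e) \<le> (Re (kform Z f f) + Re (kform Z e e)) / 2"
proof -
  define z where "z = kform Z f e"
  have ff: "0 \<le> Re (kform Z f f)" and ee: "0 \<le> Re (kform Z e e)"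
    using assms(2-4) unfolding positive_op_def by (auto simp: complex_nonneg_iff)
  show ?thesis
  proof (cases "z = 0")
    case True then show ?thesis using ff ee by (simp add: z_def)
  next
    case False
    define t where "t = - cnj z / complex_of_real (cmod z)"
    have nz: "cmod z \<noteq> 0" using False by simp
    have tz: "t * z = - complex_of_real (cmod z)"
      using nz unfolding t_def
      by (simp add: field_simps complex_norm_square[symmetric] power2_eq_square mult.commute)
    have tcz: "cnj t * cnj z = - complex_of_real (cmod z)"
      using arg_cong[OF tz, of cnj] by simp
    have tt: "cnj t * t = 1"
      using nz unfolding t_def
      by (simp add: field_simps complex_norm_square[symmetric] power2_eq_square)
    have "0 \<le> kform Z (\<lambda>a. f a + t * e a) (\<lambda>b. f b + t * e b)"
      using assms(2) unfolding positive_op_def using assms(3,4) by (simp add: ell2_add ell2_scale)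
    also have "\<dots> = kform Z f f + t * z + cnj t * cnj z + cnj t * t * kform Z e e"
      by (simp add: kform_expand[OF assms(1,3,4)] kform_hermitian[OF assms] z_def)
    also have "\<dots> = kform Z f f - 2 * complex_of_real (cmod z) + kform Z e e"
      by (simp add: tz tcz tt)
    finally have "0 \<le> Re (kform Z f f) - 2 * cmod z + Re (kform Z e e)"
      by (simp add: complex_nonneg_iff)
    then show ?thesis by (simp add: z_def)
  qed
qed

lemma infsum_finite_support:
  assumes "finite B" "\<And>x. x \<notin> B \<Longrightarrow> g x = 0"
  shows "infsum g UNIV = sum g B" and "g summable_on UNIV" and "(g has_sum sum g B) UNIV"
proof -
  show h: "(g has_sum sum g B) UNIV" by (rule has_sum_finite_neutralI) (use assms in auto)
  then show "infsum g UNIV = sum g B" by (rule infsumI)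
  from h show "g summable_on UNIV" by (rule has_sum_imp_summable)
qed

definition delta :: "'x \<Rightarrow> 'x \<Rightarrow> complex" where
  "delta a = (\<lambda>x. if x = a then 1 else 0)"

lemma ell2_delta: "ell2 (delta a)"
  by (rule ell2_finite_support) (auto simp: delta_def)

lemma cinner_delta: "cinner (delta a) (delta b) = (if a = b then 1 else 0)"
proof -
  have "cinner (delta a) (delta b) = (\<Sum>x\<in>{a}. cnj (delta a x) * delta b x)"
    unfolding cinner_def by (rule infsum_finite_support(1)) (auto simp: delta_def)
  then show ?thesis by (simp add: delta_def)
qed

lemma kform_delta: "kform Z (delta a) (delta b) = Z a b"
proof -
  have "kform Z (delta a) (delta b) = (\<Sum>x\<in>{(a,b)}. (\<lambda>(a',b'). cnj (delta a a') * Z a' b' * delta b b') x)"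
    unfolding kform_def by (rule infsum_finite_support(1)) (auto simp: delta_def split: if_splits)
  then show ?thesis by (simp add: delta_def)
qed

lemma orthonormal_delta: assumes "inj_on h {..<M}" shows "orthonormal_sys M (\<lambda>m. delta (h m))"
  using assms unfolding orthonormal_sys_def by (auto simp: ell2_delta cinner_delta inj_on_def)

lemma positive_op_diag_nonneg: "positive_op Z \<Longrightarrow> 0 \<le> Z a a"
  unfolding positive_op_def using ell2_delta[of a] kform_delta[of Z a a] by metis

lemma kform_finite_support:
  assumes "finite G" "\<And>a b. a \<notin> G \<or> b \<notin> G \<Longrightarrow> cnj (v a) * K a b * w b = 0"
  shows "kform K v w = (\<Sum>a\<in>G. \<Sum>b\<in>G. cnj (v a) * K a b * w b)"
proof -
  have "kform K v w = sum (\<lambda>(a,b). cnj (v a) * K a b * w b) (G \<times> G)"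
    unfolding kform_def
  proof (rule infsum_finite_support(1))
    fix x assume "x \<notin> G \<times> G"
    then obtain a b where "x = (a,b)" "a \<notin> G \<or> b \<notin> G" by (cases x) auto
    then show "(\<lambda>(a,b). cnj (v a) * K a b * w b) x = 0" using assms(2) by simp
  qed (use assms in auto)
  then show ?thesis by (simp add: sum.cartesian_product)
qed

lemma form_summable_finite_support:
  assumes "finite G" "\<And>a b. a \<notin> G \<or> b \<notin> G \<Longrightarrow> K a b = 0"
  shows "form_summable K"
  unfolding form_summable_def
proof (intro allI impI)
  fix f e :: "'a \<Rightarrow> complex"
  show "(\<lambda>(a,b). cnj (f a) * K a b * e b) summable_on UNIV"
  proof (rule infsum_finite_support(2)[of "G \<times> G"])
    fix x assume "x \<notin> G \<times> G"
    then obtain a b where "x = (a,b)" "a \<notin> G \<or> b \<notin> G" by (cases x) auto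
    then show "(\<lambda>(a,b). cnj (f a) * K a b * e b) x = 0" using assms(2) by simp
  qed (use assms in auto)
qed

section \<open>Trace norm and trace\<close>

lemma orthonormal_sys_0: "orthonormal_sys 0 f" by (simp add: orthonormal_sys_def)

lemma zero_in_trnorm_set: "0 \<in> trnorm_set Z"
  unfolding trnorm_set_def
  by (rule CollectI, rule exI[of _ 0], rule exI[of _ "\<lambda>_ _. 0"], rule exI[of _ "\<lambda>_ _. 0"])
     (simp add: orthonormal_sys_0)

lemma trnorm_upper: "trace_class Z \<Longrightarrow> s \<in> trnorm_set Z \<Longrightarrow> s \<le> trnorm Z"
  unfolding trnorm_def trace_class_def by (auto intro: cSup_upper)

lemma trnorm_nonneg: "trace_class Z \<Longrightarrow> 0 \<le> trnorm Z"
  using trnorm_upper zero_in_trnorm_set by blast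

lemma trnorm_least: "(\<And>s. s \<in> trnorm_set Z \<Longrightarrow> s \<le> B) \<Longrightarrow> trnorm Z \<le> B"
  unfolding trnorm_def using zero_in_trnorm_set by (intro cSup_least) auto

lemma trnorm_setE:
  assumes "s \<in> trnorm_set Z"
  obtains m f e where "orthonormal_sys m f" "orthonormal_sys m e" "s = (\<Sum>k<m. cmod (kform Z (f k) (e k)))"
  using assms unfolding trnorm_set_def by blast

lemma trnorm_setI:
  "orthonormal_sys m f \<Longrightarrow> orthonormal_sys m e \<Longrightarrow> (\<Sum>k<m. cmod (kform Z (f k) (e k))) \<in> trnorm_set Z"
  unfolding trnorm_set_def by blast

lemma orthonormal_ell2: "orthonormal_sys m f \<Longrightarrow> k < m \<Longrightarrow> ell2 (f k)"
  by (simp add: orthonormal_sys_def)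

lemma trace_classI:
  assumes "form_summable Z" "\<And>s. s \<in> trnorm_set Z \<Longrightarrow> s \<le> B"
  shows "trace_class Z"
  unfolding trace_class_def
proof (intro conjI allI impI)
  fix f e :: "'a \<Rightarrow> complex" assume "ell2 f \<and> ell2 e"
  then have "(\<lambda>(a,b). cnj (f a) * Z a b * e b) summable_on UNIV" using assms(1) form_summableD by blast
  then show "Infinite_Sum.abs_summable_on (\<lambda>(a,b). cnj (f a) * Z a b * e b) UNIV"
    using summable_on_iff_abs_summable_on_complex by blast
next
  show "bdd_above (trnorm_set Z)" using assms(2) by (intro bdd_aboveI) 
qed

lemma trace_class_lin:
  fixes X Y :: "'x kern"
  assumes X: "trace_class X" and Y: "trace_class Y"
  shows "trace_class (\<lambda>a b. \<alpha> * X a b + \<beta> * Y a b)"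
    and "trnorm (\<lambda>a b. \<alpha> * X a b + \<beta> * Y a b) \<le> cmod \<alpha> * trnorm X + cmod \<beta> * trnorm Y"
proof -
  have aX: "form_summable X" and aY: "form_summable Y" using X Y by (simp_all add: trace_class_form_summable)
  have bound: "s \<le> cmod \<alpha> * trnorm X + cmod \<beta> * trnorm Y"
    if s_in: "s \<in> trnorm_set (\<lambda>a b. \<alpha> * X a b + \<beta> * Y a b)" for s
  proof -
    obtain m f e where on: "orthonormal_sys m f" "orthonormal_sys m e"
      and s: "s = (\<Sum>k<m. cmod (kform (\<lambda>a b. \<alpha> * X a b + \<beta> * Y a b) (f k) (e k)))"
      using s_in by (rule trnorm_setE)
    have "s = (\<Sum>k<m. cmod (\<alpha> * kform X (f k) (e k) + \<beta> * kform Y (f k) (e k)))"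
      unfolding s
      by (rule sum.cong[OF refl]) 
         (simp add: kform_kernel_add form_summable_scale aX aY orthonormal_ell2[OF on(1)] orthonormal_ell2[OF on(2)] kform_kernel_scale)
    also have "\<dots> \<le> (\<Sum>k<m. cmod \<alpha> * cmod (kform X (f k) (e k)) + cmod \<beta> * cmod (kform Y (f k) (e k)))"
      by (rule sum_mono) (metis norm_mult norm_triangle_ineq)
    also have "\<dots> = cmod \<alpha> * (\<Sum>k<m. cmod (kform X (f k) (e k))) + cmod \<beta> * (\<Sum>k<m. cmod (kform Y (f k) (e k)))"
      by (simp add: sum.distrib sum_distrib_left)
    also have "\<dots> \<le> cmod \<alpha> * trnorm X + cmod \<beta> * trnorm Y"
      by (intro add_mono mult_left_mono trnorm_upper[OF X] trnorm_upper[OF Y] trnorm_setI on) auto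
    finally show ?thesis .
  qed
  show "trace_class (\<lambda>a b. \<alpha> * X a b + \<beta> * Y a b)"
    by (rule trace_classI[OF _ bound]) (simp add: form_summable_add form_summable_scale aX aY)
  show "trnorm (\<lambda>a b. \<alpha> * X a b + \<beta> * Y a b) \<le> cmod \<alpha> * trnorm X + cmod \<beta> * trnorm Y"
    by (rule trnorm_least[OF bound])
qed

lemma trace_class_zero: "trace_class (\<lambda>a b. 0)"
proof (rule trace_classI[OF form_summable_zero])
  fix s assume "s \<in> trnorm_set (\<lambda>(a::'a) (b::'a). 0::complex)"
  then show "s \<le> 0" by (auto elim!: trnorm_setE simp: kform_zero_kernel)
qed

lemma trace_class_sum:
  fixes X :: "'i \<Rightarrow> 'x kern"
  assumes "finite I" "\<And>i. i \<in> I \<Longrightarrow> trace_class (X i)"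
  shows "trace_class (\<lambda>a b. \<Sum>i\<in>I. c i * X i a b)"
  using assms
proof (induction I rule: finite_induct)
  case empty then show ?case by (simp add: trace_class_zero)
next
  case (insert x F)
  then have "trace_class (\<lambda>a b. c x * X x a b + 1 * (\<Sum>i\<in>F. c i * X i a b))"
    by (intro trace_class_lin) auto
  then show ?case using insert by simp
qed

lemma trace_class_scale: "trace_class X \<Longrightarrow> trace_class (\<lambda>a b. c * X a b)"
  using trace_class_lin(1)[of X X c 0] by simp

lemma trnorm_scale: "trace_class X \<Longrightarrow> trnorm (\<lambda>a b. c * X a b) \<le> cmod c * trnorm X"
  using trace_class_lin(2)[of X X c 0] by simp


lemma sum_cmod_diag_le_trnorm:
  assumes T: "trace_class T" and F: "finite F"
  shows "(\<Sum>a\<in>F. cmod (T a a)) \<le> trnorm T"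
proof -
  obtain h where h: "bij_betw h {0..<card F} F" using ex_bij_betw_nat_finite[OF F] by blast
  then have h': "bij_betw h {..<card F} F" by (simp add: atLeast0LessThan)
  have inj: "inj_on h {..<card F}" using h' by (simp add: bij_betw_def)
  have on: "orthonormal_sys (card F) (\<lambda>m. delta (h m))" by (rule orthonormal_delta[OF inj])
  have "(\<Sum>a\<in>F. cmod (T a a)) = (\<Sum>m<card F. cmod (T (h m) (h m)))"
    using sum.reindex_bij_betw[OF h', of "\<lambda>a. cmod (T a a)"] by simp
  also have "\<dots> = (\<Sum>m<card F. cmod (kform T (delta (h m)) (delta (h m))))"
    by (simp add: kform_delta)
  also have "\<dots> \<le> trnorm T" by (rule trnorm_upper[OF T trnorm_setI[OF on on]])
  finally show ?thesis .
qed

lemma diag_summable: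
  assumes T: "trace_class T"
  shows "(\<lambda>a. T a a) summable_on UNIV" and "(\<lambda>a. cmod (T a a)) summable_on UNIV"
proof -
  show s: "(\<lambda>a. cmod (T a a)) summable_on UNIV"
    by (rule nonneg_bdd_above_summable_on) (auto intro!: bdd_aboveI[of _ "trnorm T"] sum_cmod_diag_le_trnorm[OF T])
  then show "(\<lambda>a. T a a) summable_on UNIV"
    using summable_on_iff_abs_summable_on_complex by blast
qed

lemma tr_le_trnorm:
  assumes T: "trace_class T"
  shows "cmod (tr T) \<le> trnorm T"
proof -
  have "cmod (tr T) \<le> (\<Sum>\<^sub>\<infinity>a. cmod (T a a))"
    unfolding tr_def
    by (rule norm_infsum_le[OF has_sum_infsum has_sum_infsum]) (use diag_summable[OF T] in auto)
  also have "\<dots> \<le> trnorm T"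
    by (rule infsum_le_finite_sums) (use diag_summable[OF T] sum_cmod_diag_le_trnorm[OF T] in auto)
  finally show ?thesis .
qed

lemma tr_lin:
  assumes X: "trace_class X" and Y: "trace_class Y"
  shows "tr (\<lambda>a b. \<alpha> * X a b + \<beta> * Y a b) = \<alpha> * tr X + \<beta> * tr Y"
  unfolding tr_def
  by (subst infsum_add) (auto intro!: summable_on_cmult_right[OF diag_summable(1)[OF X]] 
      summable_on_cmult_right[OF diag_summable(1)[OF Y]] simp: infsum_cmult_right')

lemma tr_sum:
  fixes X :: "'i \<Rightarrow> 'x kern"
  assumes "finite I" "\<And>i. i \<in> I \<Longrightarrow> trace_class (X i)"
  shows "tr (\<lambda>a b. \<Sum>i\<in>I. c i * X i a b) = (\<Sum>i\<in>I. c i * tr (X i))"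
proof -
  have sm: "\<And>i. i \<in> I \<Longrightarrow> (\<lambda>a. c i * X i a a) summable_on UNIV"
    using summable_on_cmult_right[OF diag_summable(1)[OF assms(2)]] by blast
  show ?thesis unfolding tr_def
    by (subst infsum_sum(1)) (auto intro: sm assms(1) simp: infsum_cmult_right')
qed

lemma tr_nonneg:
  assumes "trace_class Z" "positive_op Z"
  shows "0 \<le> tr Z"
  unfolding tr_def by (rule infsum_nonneg_complex) (auto intro: diag_summable assms positive_op_diag_nonneg)

section \<open>Positive kernels with summable diagonal are trace class\<close>

lemma cmod_mult_self: "cmod z * cmod z = Re z * Re z + Im z * Im z"
  by (metis cmod_power2 power2_eq_square)

lemma ell2_upd: assumes "ell2 v" shows "ell2 (v(x := s))"
proof -
  have "v(x := s) = (\<lambda>a. v a + (s - v x) * delta x a)"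
    by (auto simp: delta_def)
  then show ?thesis using assms by (simp add: ell2_add ell2_scale ell2_delta)
qed

lemma kform_minus_rank_one:
  fixes A :: "'x kern"
  assumes G: "finite G" and A: "\<And>a b. a \<notin> G \<or> b \<notin> G \<Longrightarrow> A a b = 0"
    and u: "\<And>a. a \<notin> G \<Longrightarrow> u a = 0"
  shows "kform (\<lambda>a b. A a b - u a * cnj (u b)) g g = kform A g g - cinner g u * cnj (cinner g u)"
proof -
  have "cinner g u = (\<Sum>a\<in>G. cnj (g a) * u a)"
    unfolding cinner_def by (rule infsum_finite_support(1)[OF G]) (use u in auto)
  then have "cinner g u * cnj (cinner g u) = (\<Sum>a\<in>G. \<Sum>b\<in>G. (cnj (g a) * u a) * (g b * cnj (u b)))"
    by (simp only: cnj_sum complex_cnj_mult complex_cnj_cnj sum_product)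
  also have "\<dots> = (\<Sum>a\<in>G. \<Sum>b\<in>G. cnj (g a) * (u a * cnj (u b)) * g b)"
    by (intro sum.cong refl) (simp add: algebra_simps)
  finally have uu: "cinner g u * cnj (cinner g u) = \<dots>" .
  have split: "cnj (g a) * (A a b - u a * cnj (u b)) * g b
      = cnj (g a) * A a b * g b - cnj (g a) * (u a * cnj (u b)) * g b" for a b
    by (simp add: algebra_simps)
  have "kform (\<lambda>a b. A a b - u a * cnj (u b)) g g
      = (\<Sum>a\<in>G. \<Sum>b\<in>G. cnj (g a) * (A a b - u a * cnj (u b)) * g b)"
    by (rule kform_finite_support[OF G]) (use A u in auto)
  also have "\<dots> = (\<Sum>a\<in>G. \<Sum>b\<in>G. cnj (g a) * A a b * g b) - cinner g u * cnj (cinner g u)"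
    unfolding split uu by (simp add: sum_subtractf)
  also have "(\<Sum>a\<in>G. \<Sum>b\<in>G. cnj (g a) * A a b * g b) = kform A g g"
    by (rule kform_finite_support[OF G, symmetric]) (use A in auto)
  finally show ?thesis .
qed

lemma positive_op_diag_zero_row:
  fixes A :: "'x kern"
  assumes aA: "form_summable A" and pA: "positive_op A" and z: "A x x = 0"
  shows "A b x = 0"
proof (rule ccontr)
  define c where "c = A b x"
  assume nz: "A b x \<noteq> 0"
  then have cnz: "cmod c \<noteq> 0" by (simp add: c_def)
  have herm: "A x b = cnj c"
    using kform_hermitian[OF aA pA ell2_delta ell2_delta, of b x] by (simp add: kform_delta c_def)
  define s where "s = (Re (A b b) + 1) / (cmod c)\<^sup>2"
  define t where "t = - complex_of_real s * cnj c"
  have tc: "t * c = - complex_of_real (Re (A b b) + 1)"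
  proof -
    have "t * c = - complex_of_real s * (c * cnj c)" by (simp add: t_def mult.commute mult.left_commute)
    also have "\<dots> = - complex_of_real (s * (cmod c)\<^sup>2)" by (simp add: complex_norm_square[symmetric])
    also have "s * (cmod c)\<^sup>2 = Re (A b b) + 1" using cnz by (simp add: s_def)
    finally show ?thesis .
  qed
  have tc': "cnj t * cnj c = - complex_of_real (Re (A b b) + 1)"
    using arg_cong[OF tc, of cnj] by simp
  have "0 \<le> kform A (\<lambda>a. delta b a + t * delta x a) (\<lambda>a. delta b a + t * delta x a)"
    using pA unfolding positive_op_def by (simp add: ell2_add ell2_scale ell2_delta)
  also have "\<dots> = A b b + t * c + cnj t * cnj c"
    by (simp add: kform_expand[OF aA ell2_delta ell2_delta] kform_delta c_def[symmetric] herm z)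
  also have "\<dots> = A b b - 2 * complex_of_real (Re (A b b) + 1)" by (simp add: tc tc')
  finally have "0 \<le> Re (A b b) - 2 * (Re (A b b) + 1)" by (simp add: complex_nonneg_iff)
  moreover have "0 \<le> Re (A b b)" using positive_op_diag_nonneg[OF pA, of b] by (simp add: complex_nonneg_iff)
  ultimately show False by (simp add: algebra_simps)
qed

text \<open>A vector v is changed at x only, to w, so that w is orthogonal to u; the kernel minus
  u u* does not see the change, while on w it agrees with A.\<close>

lemma positive_op_minus_rank_one:
  fixes A :: "'x kern"
  assumes F: "finite F" "x \<notin> F"
    and A: "\<And>a b. a \<notin> insert x F \<or> b \<notin> insert x F \<Longrightarrow> A a b = 0" and pA: "positive_op A"
    and u: "\<And>a. a \<notin> insert x F \<Longrightarrow> u a = 0" and ux: "u x \<noteq> 0"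
    and uA: "\<And>a b. a \<notin> F \<or> b \<notin> F \<Longrightarrow> A a b = u a * cnj (u b)"
  shows "positive_op (\<lambda>a b. A a b - u a * cnj (u b))"
  unfolding positive_op_def
proof (intro allI impI)
  fix v :: "'x \<Rightarrow> complex" assume v: "ell2 v"
  define A' where "A' a b = A a b - u a * cnj (u b)" for a b
  have A'F: "A' a b = 0" if "a \<notin> F \<or> b \<notin> F" for a b using uA[OF that] by (simp add: A'_def)
  define w where "w = v(x := cnj (- (\<Sum>a\<in>F. cnj (v a) * u a) / u x))"
  have w_on_F: "w a = v a" if "a \<in> F" for a using that F(2) by (auto simp: w_def)
  have "kform A' v v = (\<Sum>a\<in>F. \<Sum>b\<in>F. cnj (v a) * A' a b * v b)"
    by (rule kform_finite_support[OF F(1)]) (use A'F in auto)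
  also have "\<dots> = (\<Sum>a\<in>F. \<Sum>b\<in>F. cnj (w a) * A' a b * w b)"
    by (intro sum.cong refl) (simp add: w_on_F)
  also have "\<dots> = kform A' w w"
    by (rule kform_finite_support[OF F(1), symmetric]) (use A'F in auto)
  finally have vw: "kform A' v v = kform A' w w" .
  have "cinner w u = (\<Sum>a\<in>insert x F. cnj (w a) * u a)"
    unfolding cinner_def by (rule infsum_finite_support(1)) (use F u in auto)
  also have "\<dots> = cnj (w x) * u x + (\<Sum>a\<in>F. cnj (w a) * u a)" using F by simp
  also have "(\<Sum>a\<in>F. cnj (w a) * u a) = (\<Sum>a\<in>F. cnj (v a) * u a)"
    by (rule sum.cong) (simp_all add: w_on_F)
  also have "cnj (w x) * u x = - (\<Sum>a\<in>F. cnj (v a) * u a)" using ux by (simp add: w_def)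
  finally have "cinner w u = 0" by simp
  moreover have "kform A' w w = kform A w w - cinner w u * cnj (cinner w u)"
    unfolding A'_def[abs_def] by (rule kform_minus_rank_one[of "insert x F"]) (use F A u in auto)
  moreover have "0 \<le> kform A w w"
    using pA ell2_upd[OF v] unfolding positive_op_def w_def by blast
  ultimately show "0 \<le> kform (\<lambda>a b. A a b - u a * cnj (u b)) v v"
    using vw unfolding A'_def[abs_def] by simp
qed

text \<open>The column at x of a positive kernel with nonzero diagonal entry there, scaled by
  1 / sqrt (A x x), gives the rank-one term u u* that agrees with A off F \<times> F.\<close>

lemma positive_op_column_factor:
  fixes A :: "'x kern"
  assumes A: "\<And>a b. a \<notin> insert x F \<or> b \<notin> insert x F \<Longrightarrow> A a b = 0"
    and aA: "form_summable A" and pA: "positive_op A" and nz: "A x x \<noteq> 0"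
  obtains u where "\<And>a. a \<notin> insert x F \<Longrightarrow> u a = 0" and "u x \<noteq> 0"
    and "\<And>a b. a \<notin> F \<or> b \<notin> F \<Longrightarrow> A a b = u a * cnj (u b)"
proof -
  have herm: "A c b = cnj (A b c)" for b c
    using kform_hermitian[OF aA pA ell2_delta ell2_delta, of b c] by (simp add: kform_delta)
  define r where "r = Re (A x x)"
  have Axx: "A x x = complex_of_real r"
    using positive_op_diag_nonneg[OF pA, of x] by (simp add: r_def complex_nonneg_iff complex_eq_iff)
  with nz positive_op_diag_nonneg[OF pA, of x] have r: "r > 0"
    by (auto simp: complex_nonneg_iff)
  define u where "u b = A b x / complex_of_real (sqrt r)" for b
  have "u x = complex_of_real (r / sqrt r)" by (simp add: u_def Axx)
  then have ux: "u x = complex_of_real (sqrt r)" using r by (simp add: real_div_sqrt)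
  have u0: "u a = 0" if "a \<notin> insert x F" for a using A that by (simp add: u_def)
  have uA: "A a b = u a * cnj (u b)" if ab: "a \<notin> F \<or> b \<notin> F" for a b
  proof (cases "a \<in> insert x F \<and> b \<in> insert x F")
    case False then show ?thesis using A u0 by auto
  next
    case True
    then consider "a = x" | "b = x" using ab by auto
    then show ?thesis
    proof cases
      case 1
      have "u x * cnj (u b) = cnj (A b x)" unfolding ux using r by (simp add: u_def)
      then show ?thesis using 1 herm[of b x] by simp
    next
      case 2
      have "u a * cnj (u x) = A a x" unfolding ux using r by (simp add: u_def)
      then show ?thesis using 2 by simp
    qed
  qed
  have "u x \<noteq> 0" using r ux by simp
  from u0 this uA show ?thesis by (rule that)
qed

text \<open>One step of a Cholesky factorisation: the row and column at x are split off as a rank-one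
  term u u*, leaving a positive kernel supported on F.\<close>

lemma positive_op_peel_rank_one:
  fixes A :: "'x kern"
  assumes F: "finite F" "x \<notin> F"
    and A: "\<And>a b. a \<notin> insert x F \<or> b \<notin> insert x F \<Longrightarrow> A a b = 0" and pA: "positive_op A"
  obtains u where "\<And>a. a \<notin> insert x F \<Longrightarrow> u a = 0"
    and "\<And>a b. a \<notin> F \<or> b \<notin> F \<Longrightarrow> A a b = u a * cnj (u b)"
    and "positive_op (\<lambda>a b. A a b - u a * cnj (u b))"
proof -
  have aA: "form_summable A"
    by (rule form_summable_finite_support[of "insert x F"]) (use F A in auto)
  show ?thesis
  proof (cases "A x x = 0")
    case True
    have "A b x = 0" "cnj (A x b) = 0" for b
      using positive_op_diag_zero_row[OF aA pA True, of b]
        kform_hermitian[OF aA pA ell2_delta ell2_delta, of x b] by (simp_all add: kform_delta)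
    then have row: "A b x = 0" "A x b = 0" for b by simp_all
    show ?thesis
    proof (rule that[of "\<lambda>_. 0"])
      show "A a b = 0 * cnj 0" if "a \<notin> F \<or> b \<notin> F" for a b
        using that A row by (cases "a = x"; cases "b = x") auto
    qed (simp_all add: pA)
  next
    case False
    obtain u where u0: "\<And>a. a \<notin> insert x F \<Longrightarrow> u a = 0" and ux: "u x \<noteq> 0"
      and uA: "\<And>a b. a \<notin> F \<or> b \<notin> F \<Longrightarrow> A a b = u a * cnj (u b)"
      using positive_op_column_factor[where F = F, OF _ aA pA False] A by blast
    have "positive_op (\<lambda>a b. A a b - u a * cnj (u b))"
      by (rule positive_op_minus_rank_one[of F x A u]) (fact F A pA u0 ux uA)+
    with u0 uA show ?thesis by (rule that)
  qed
qed

lemma sum_kform_le_diag_sum: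
  fixes A :: "'x kern"
  assumes "finite F" "\<And>a b. a \<notin> F \<or> b \<notin> F \<Longrightarrow> A a b = 0" "positive_op A"
    and on: "orthonormal_sys M f"
  shows "(\<Sum>m<M. Re (kform A (f m) (f m))) \<le> Re (\<Sum>a\<in>F. A a a)"
  using assms(1,2,3)
proof (induction F arbitrary: A rule: finite_induct)
  case empty
  then have "A = (\<lambda>a b. 0)" by (intro ext) auto
  then show ?case by (simp add: kform_zero_kernel)
next
  case (insert x F A)
  obtain u where u0: "\<And>a. a \<notin> insert x F \<Longrightarrow> u a = 0"
    and uA: "\<And>a b. a \<notin> F \<or> b \<notin> F \<Longrightarrow> A a b = u a * cnj (u b)"
    and pA': "positive_op (\<lambda>a b. A a b - u a * cnj (u b))"
    using positive_op_peel_rank_one[OF insert.hyps, of A] insert.prems by blast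
  define A' where "A' a b = A a b - u a * cnj (u b)" for a b
  have IH: "(\<Sum>m<M. Re (kform A' (f m) (f m))) \<le> Re (\<Sum>a\<in>F. A' a a)"
    by (rule insert.IH) (use uA pA' in \<open>simp_all add: A'_def[abs_def]\<close>)
  have ell2u: "ell2 u"
    by (rule ell2_finite_support, rule finite_subset[of _ "insert x F"]) (use u0 insert.hyps in auto)
  have peel: "Re (kform A (f m) (f m)) = Re (kform A' (f m) (f m)) + (cmod (cinner (f m) u))\<^sup>2" for m
  proof -
    have "kform A' (f m) (f m) = kform A (f m) (f m) - cinner (f m) u * cnj (cinner (f m) u)"
      unfolding A'_def[abs_def]
      by (rule kform_minus_rank_one[of "insert x F"]) (use insert.hyps insert.prems(1) u0 in auto)
    then show ?thesis by (simp add: power2_eq_square cmod_mult_self)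
  qed
  have "Re (cinner u u) = (\<Sum>a\<in>insert x F. Re (u a * cnj (u a)))"
    using infsum_finite_support(1)[of "insert x F" "\<lambda>a. cnj (u a) * u a"] insert.hyps u0
    by (simp add: cinner_def mult.commute)
  also have "\<dots> = Re (A x x) + (\<Sum>a\<in>F. Re (A a a) - Re (A' a a))"
    using insert.hyps uA[of x x] by (simp add: A'_def)
  also have "\<dots> = Re (\<Sum>a\<in>insert x F. A a a) - Re (\<Sum>a\<in>F. A' a a)"
    using insert.hyps by (simp add: sum_subtractf)
  finally have diag: "Re (\<Sum>a\<in>insert x F. A a a) = Re (\<Sum>a\<in>F. A' a a) + Re (cinner u u)" by simp
  have "(\<Sum>m<M. Re (kform A (f m) (f m)))
      = (\<Sum>m<M. Re (kform A' (f m) (f m))) + (\<Sum>m<M. (cmod (cinner (f m) u))\<^sup>2)"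
    by (simp add: peel sum.distrib)
  also have "\<dots> \<le> Re (\<Sum>a\<in>F. A' a a) + Re (cinner u u)"
    by (rule add_mono[OF IH bessel_inequality[OF ell2u on]])
  finally show ?case unfolding diag .
qed

lemma tendsto_sum_Times_self:
  fixes G :: "('a \<times> 'a) \<Rightarrow> 'b::{comm_monoid_add,topological_space}"
  assumes "(G has_sum s) UNIV"
  shows "((\<lambda>F. sum G (F \<times> F)) \<longlongrightarrow> s) (finite_subsets_at_top UNIV)"
proof -
  have "filterlim (\<lambda>F::'a set. F \<times> F) (finite_subsets_at_top UNIV) (finite_subsets_at_top UNIV)"
    unfolding filterlim_finite_subsets_at_top
  proof (intro allI impI)
    fix X :: "('a \<times> 'a) set" assume "finite X \<and> X \<subseteq> UNIV"
    then have fin: "finite (fst ` X \<union> snd ` X)" by auto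
    show "eventually (\<lambda>y. finite (y \<times> y) \<and> X \<subseteq> y \<times> y \<and> y \<times> y \<subseteq> UNIV) (finite_subsets_at_top UNIV)"
      unfolding eventually_finite_subsets_at_top
    proof (rule exI[of _ "fst ` X \<union> snd ` X"], intro conjI allI impI)
      fix Y assume Y: "finite Y \<and> fst ` X \<union> snd ` X \<subseteq> Y \<and> Y \<subseteq> UNIV"
      then show "finite (Y \<times> Y)" by simp
      show "X \<subseteq> Y \<times> Y"
      proof
        fix p assume "p \<in> X"
        then have "fst p \<in> Y" "snd p \<in> Y" using Y by auto
        then show "p \<in> Y \<times> Y" by (cases p) auto
      qed
    qed (use fin in auto)
  qed
  from filterlim_compose[OF assms[unfolded has_sum_def] this] show ?thesis .
qed

definition restrict_kern :: "'x set \<Rightarrow> 'x kern \<Rightarrow> 'x kern" where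
  "restrict_kern F Z = (\<lambda>a b. if a \<in> F \<and> b \<in> F then Z a b else 0)"

lemma positive_op_restrict_kern:
  fixes Z :: "'x kern"
  assumes pZ: "positive_op Z" and F: "finite F"
  shows "positive_op (restrict_kern F Z)"
  unfolding positive_op_def
proof (intro allI impI)
  fix v :: "'x \<Rightarrow> complex"
  define vF where "vF = (\<lambda>a. if a \<in> F then v a else 0)"
  have "ell2 vF" by (rule ell2_finite_support) (use F in \<open>auto simp: vF_def elim: rev_finite_subset\<close>)
  have "kform (restrict_kern F Z) v v = (\<Sum>a\<in>F. \<Sum>b\<in>F. cnj (v a) * restrict_kern F Z a b * v b)"
    by (rule kform_finite_support[OF F]) (auto simp: restrict_kern_def)
  also have "\<dots> = (\<Sum>a\<in>F. \<Sum>b\<in>F. cnj (vF a) * Z a b * vF b)"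
    by (intro sum.cong refl) (auto simp: restrict_kern_def vF_def)
  also have "\<dots> = kform Z vF vF"
    by (rule kform_finite_support[OF F, symmetric]) (auto simp: vF_def)
  finally show "0 \<le> kform (restrict_kern F Z) v v" using pZ \<open>ell2 vF\<close> by (simp add: positive_op_def)
qed

text \<open>Truncate Z to finite squares F \<times> F, apply the finite-support bound, and pass to the limit.\<close>

lemma sum_kform_le_tr:
  fixes Z :: "'x kern"
  assumes aZ: "form_summable Z" and pZ: "positive_op Z" and dZ: "(\<lambda>a. Z a a) summable_on UNIV"
    and on: "orthonormal_sys M f"
  shows "(\<Sum>m<M. Re (kform Z (f m) (f m))) \<le> Re (tr Z)"
proof -
  define g where "g m = (\<lambda>(a,b). cnj (f m a) * Z a b * f m b)" for m
  have hs: "(g m has_sum kform Z (f m) (f m)) UNIV" if "m < M" for m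
    unfolding kform_def g_def
    by (rule has_sum_infsum, rule form_summableD[OF aZ orthonormal_ell2[OF on that] orthonormal_ell2[OF on that]])
  have lim: "((\<lambda>F. \<Sum>m<M. Re (sum (g m) (F \<times> F))) \<longlongrightarrow> (\<Sum>m<M. Re (kform Z (f m) (f m))))
      (finite_subsets_at_top UNIV)"
    by (intro tendsto_sum tendsto_Re tendsto_sum_Times_self hs) simp
  have bound: "(\<Sum>m<M. Re (sum (g m) (F \<times> F))) \<le> Re (tr Z)" if F: "finite F" for F
  proof -
    have "sum (g m) (F \<times> F) = kform (restrict_kern F Z) (f m) (f m)" for m
      by (subst kform_finite_support[OF F]) (auto simp: restrict_kern_def g_def sum.cartesian_product)
    then have "(\<Sum>m<M. Re (sum (g m) (F \<times> F))) = (\<Sum>m<M. Re (kform (restrict_kern F Z) (f m) (f m)))"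
      by simp
    also have "\<dots> \<le> Re (\<Sum>a\<in>F. restrict_kern F Z a a)"
      by (rule sum_kform_le_diag_sum[OF F _ positive_op_restrict_kern[OF pZ F] on])
         (auto simp: restrict_kern_def)
    also have "\<dots> = (\<Sum>a\<in>F. Re (Z a a))" by (simp add: restrict_kern_def)
    also have "\<dots> \<le> (\<Sum>\<^sub>\<infinity>a. Re (Z a a))"
      by (rule finite_sum_le_infsum[OF summable_on_Re[OF dZ] F])
         (auto simp: positive_op_diag_nonneg[OF pZ, unfolded complex_nonneg_iff])
    also have "\<dots> = Re (tr Z)" unfolding tr_def by (rule infsum_Re[OF dZ])
    finally show ?thesis .
  qed
  have "eventually (\<lambda>F. (\<Sum>m<M. Re (sum (g m) (F \<times> F))) \<le> Re (tr Z)) (finite_subsets_at_top UNIV)"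
    by (rule eventually_finite_subsets_at_top_weakI) (rule bound)
  then show ?thesis by (rule tendsto_upperbound[OF lim]) (simp add: finite_subsets_at_top_neq_bot)
qed

lemma trace_class_positive_op:
  fixes Z :: "'x kern"
  assumes aZ: "form_summable Z" and pZ: "positive_op Z" and dZ: "(\<lambda>a. Z a a) summable_on UNIV"
  shows "trace_class Z" and "trnorm Z \<le> Re (tr Z)"
proof -
  have bound: "s \<le> Re (tr Z)" if s_in: "s \<in> trnorm_set Z" for s
  proof -
    obtain m f e where on: "orthonormal_sys m f" "orthonormal_sys m e"
      and s: "s = (\<Sum>k<m. cmod (kform Z (f k) (e k)))"
      using s_in by (rule trnorm_setE)
    have "s \<le> (\<Sum>k<m. (Re (kform Z (f k) (f k)) + Re (kform Z (e k) (e k))) / 2)"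
      unfolding s by (intro sum_mono kform_amgm[OF aZ pZ]) (auto intro: orthonormal_ell2 on)
    also have "\<dots> = ((\<Sum>k<m. Re (kform Z (f k) (f k))) + (\<Sum>k<m. Re (kform Z (e k) (e k)))) / 2"
      by (simp only: sum_divide_distrib[symmetric] sum.distrib)
    also have "\<dots> \<le> (Re (tr Z) + Re (tr Z)) / 2"
      using sum_kform_le_tr[OF aZ pZ dZ on(1)] sum_kform_le_tr[OF aZ pZ dZ on(2)] by simp
    finally show ?thesis by simp
  qed
  show "trace_class Z" by (rule trace_classI[OF aZ bound])
  show "trnorm Z \<le> Re (tr Z)" by (rule trnorm_least[OF bound])
qed

section \<open>Embedding into the amplified space\<close>

lemma infsum_reindex_support:
  fixes g :: "'c \<Rightarrow> 'b::{comm_monoid_add,t2_space}"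
  assumes "inj h" "\<And>y. y \<notin> range h \<Longrightarrow> g y = 0"
  shows "infsum g UNIV = infsum (\<lambda>x. g (h x)) UNIV"
    and "g summable_on UNIV \<longleftrightarrow> (\<lambda>x. g (h x)) summable_on UNIV"
proof -
  have "infsum g UNIV = infsum g (range h)"
    by (rule infsum_cong_neutral) (use assms in auto)
  also have "\<dots> = infsum (g \<circ> h) UNIV" by (rule infsum_reindex) (use assms in \<open>simp add: inj_on_def inj_def\<close>)
  finally show "infsum g UNIV = infsum (\<lambda>x. g (h x)) UNIV" by (simp add: comp_def)
  have "g summable_on UNIV \<longleftrightarrow> g summable_on (range h)"
    by (rule summable_on_cong_neutral) (use assms in auto)
  also have "\<dots> \<longleftrightarrow> (g \<circ> h) summable_on UNIV" by (rule summable_on_reindex) (use assms in \<open>simp add: inj_on_def inj_def\<close>)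
  finally show "g summable_on UNIV \<longleftrightarrow> (\<lambda>x. g (h x)) summable_on UNIV" by (simp add: comp_def)
qed

definition embed_vec :: "nat \<Rightarrow> ('x \<Rightarrow> complex) \<Rightarrow> ('x \<times> nat \<Rightarrow> complex)" where
  "embed_vec k v = (\<lambda>(a,k'). if k' = k then v a else 0)"

definition embed_kern :: "'x kern \<Rightarrow> ('x \<times> nat) kern" where
  "embed_kern Z = (\<lambda>(a,k) (b,l). if k = 0 \<and> l = 0 then Z a b else 0)"

definition block :: "nat \<Rightarrow> nat \<Rightarrow> ('x \<times> nat) kern \<Rightarrow> 'x kern" where
  "block k l X = (\<lambda>a b. X (a,k) (b,l))"

lemma inj_pair_const: "inj (\<lambda>a. (a, k))" by (simp add: inj_def)
lemma inj_pair_pair_const: "inj (\<lambda>(a,b). ((a, k), (b, l)))" by (auto simp: inj_def)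

lemma ell2_embed_vec: assumes "ell2 v" shows "ell2 (embed_vec k v)"
proof -
  have "(\<lambda>p. (cmod (embed_vec k v p))\<^sup>2) summable_on UNIV \<longleftrightarrow> (\<lambda>a. (cmod (embed_vec k v (a,k)))\<^sup>2) summable_on UNIV"
    by (rule infsum_reindex_support(2)[OF inj_pair_const]) (auto simp: embed_vec_def)
  then show ?thesis using assms by (simp add: ell2_def embed_vec_def)
qed

lemma ell2_slice: assumes "ell2 w" shows "ell2 (\<lambda>a. w (a, k))"
proof -
  have "(\<lambda>p. (cmod (w p))\<^sup>2) summable_on range (\<lambda>a. (a,k))"
    using assms unfolding ell2_def by (rule summable_on_subset) simp
  then have "((\<lambda>p. (cmod (w p))\<^sup>2) \<circ> (\<lambda>a. (a,k))) summable_on UNIV"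
    by (subst summable_on_reindex[symmetric]) (auto simp: inj_on_def)
  then show ?thesis by (simp add: ell2_def comp_def)
qed

lemma cinner_embed_vec: "cinner (embed_vec k v) (embed_vec k w) = cinner v w"
proof -
  have "cinner (embed_vec k v) (embed_vec k w) = (\<Sum>\<^sub>\<infinity>a. cnj (embed_vec k v (a,k)) * embed_vec k w (a,k))"
    unfolding cinner_def by (rule infsum_reindex_support(1)[OF inj_pair_const]) (auto simp: embed_vec_def)
  then show ?thesis by (simp add: cinner_def embed_vec_def)
qed

lemma orthonormal_embed_vec: "orthonormal_sys M f \<Longrightarrow> orthonormal_sys M (\<lambda>m. embed_vec k (f m))"
  by (simp add: orthonormal_sys_def ell2_embed_vec cinner_embed_vec)

lemma kform_embed_vec:
  shows "kform X (embed_vec k f) (embed_vec l e) = kform (block k l X) f e"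
    and "(\<lambda>(p,q). cnj (embed_vec k f p) * X p q * embed_vec l e q) summable_on UNIV \<longleftrightarrow>
         (\<lambda>(a,b). cnj (f a) * block k l X a b * e b) summable_on UNIV"
proof -
  define h :: "'a \<times> 'a \<Rightarrow> ('a \<times> nat) \<times> ('a \<times> nat)" where "h = (\<lambda>(a,b). ((a, k), (b, l)))"
  define G where "G = (\<lambda>(p,q). cnj (embed_vec k f p) * X p q * embed_vec l e q)"
  have ih: "inj h" unfolding h_def by (rule inj_pair_pair_const)
  have supp: "G y = 0" if y: "y \<notin> range h" for y
  proof -
    obtain a k' b l' where yy: "y = ((a,k'),(b,l'))" by (metis prod.exhaust)
    have "k' \<noteq> k \<or> l' \<noteq> l"
    proof (rule ccontr)
      assume "\<not> (k' \<noteq> k \<or> l' \<noteq> l)"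
      then have "y = h (a,b)" using yy by (simp add: h_def)
      then show False using y by blast
    qed
    then show ?thesis by (auto simp: yy embed_vec_def G_def)
  qed
  have eq: "(\<lambda>x. G (h x)) = (\<lambda>(a,b). cnj (f a) * block k l X a b * e b)"
    by (auto simp: embed_vec_def block_def G_def h_def)
  show "kform X (embed_vec k f) (embed_vec l e) = kform (block k l X) f e"
    unfolding kform_def using infsum_reindex_support(1)[of h G, OF ih supp] eq by (simp add: G_def)
  show "(\<lambda>(p,q). cnj (embed_vec k f p) * X p q * embed_vec l e q) summable_on UNIV \<longleftrightarrow>
         (\<lambda>(a,b). cnj (f a) * block k l X a b * e b) summable_on UNIV"
    using infsum_reindex_support(2)[of h G, OF ih supp] eq by (simp add: G_def)
qed

lemma kform_embed_kern:
  shows "kform (embed_kern Z) f e = kform Z (\<lambda>a. f (a,0)) (\<lambda>b. e (b,0))"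
    and "(\<lambda>(p,q). cnj (f p) * embed_kern Z p q * e q) summable_on UNIV \<longleftrightarrow>
         (\<lambda>(a,b). cnj (f (a,0)) * Z a b * e (b,0)) summable_on UNIV"
proof -
  define h :: "'a \<times> 'a \<Rightarrow> ('a \<times> nat) \<times> ('a \<times> nat)" where "h = (\<lambda>(a,b). ((a, 0), (b, 0)))"
  define G where "G = (\<lambda>(p,q). cnj (f p) * embed_kern Z p q * e q)"
  have ih: "inj h" unfolding h_def by (rule inj_pair_pair_const)
  have supp: "G y = 0" if y: "y \<notin> range h" for y
  proof -
    obtain a k' b l' where yy: "y = ((a,k'),(b,l'))" by (metis prod.exhaust)
    have "k' \<noteq> 0 \<or> l' \<noteq> 0"
    proof (rule ccontr)
      assume "\<not> (k' \<noteq> 0 \<or> l' \<noteq> 0)"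
      then have "y = h (a,b)" using yy by (simp add: h_def)
      then show False using y by blast
    qed
    then show ?thesis by (auto simp: yy embed_kern_def G_def)
  qed
  have eq: "(\<lambda>x. G (h x)) = (\<lambda>(a,b). cnj (f (a,0)) * Z a b * e (b,0))"
    by (auto simp: embed_kern_def G_def h_def)
  show "kform (embed_kern Z) f e = kform Z (\<lambda>a. f (a,0)) (\<lambda>b. e (b,0))"
    unfolding kform_def using infsum_reindex_support(1)[of h G, OF ih supp] eq by (simp add: G_def)
  show "(\<lambda>(p,q). cnj (f p) * embed_kern Z p q * e q) summable_on UNIV \<longleftrightarrow>
         (\<lambda>(a,b). cnj (f (a,0)) * Z a b * e (b,0)) summable_on UNIV"
    using infsum_reindex_support(2)[of h G, OF ih supp] eq by (simp add: G_def)
qed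

lemma trace_class_block:
  assumes X: "trace_class X"
  shows "trace_class (block k l X)"
proof (rule trace_classI)
  show "form_summable (block k l X)"
    unfolding form_summable_def
  proof (intro allI impI)
    fix f e :: "'a \<Rightarrow> complex" assume fe: "ell2 f \<and> ell2 e"
    have "(\<lambda>(p,q). cnj (embed_vec k f p) * X p q * embed_vec l e q) summable_on UNIV"
      by (rule form_summableD[OF trace_class_form_summable[OF X] ell2_embed_vec ell2_embed_vec]) (use fe in simp_all)
    then show "(\<lambda>(a,b). cnj (f a) * block k l X a b * e b) summable_on UNIV"
      by (simp only: kform_embed_vec(2))
  qed
next
  fix s assume "s \<in> trnorm_set (block k l X)"
  then obtain m f e where on: "orthonormal_sys m f" "orthonormal_sys m e"
      and s: "s = (\<Sum>i<m. cmod (kform (block k l X) (f i) (e i)))"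
    by (rule trnorm_setE)
  have "s = (\<Sum>i<m. cmod (kform X (embed_vec k (f i)) (embed_vec l (e i))))"
    by (simp add: s kform_embed_vec)
  also have "\<dots> \<le> trnorm X"
    by (rule trnorm_upper[OF X trnorm_setI]) (use on orthonormal_embed_vec in auto)
  finally show "s \<le> trnorm X" .
qed

lemma form_summable_embed_kern: assumes "form_summable Z" shows "form_summable (embed_kern Z)"
  unfolding form_summable_def
proof (intro allI impI)
  fix f e :: "'a \<times> nat \<Rightarrow> complex" assume fe: "ell2 f \<and> ell2 e"
  have "(\<lambda>(a,b). cnj (f (a,0)) * Z a b * e (b,0)) summable_on UNIV"
    by (rule form_summableD[OF assms ell2_slice ell2_slice]) (use fe in simp_all)
  then show "(\<lambda>(p,q). cnj (f p) * embed_kern Z p q * e q) summable_on UNIV"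
    by (simp only: kform_embed_kern(2))
qed

lemma positive_embed_kern: assumes "positive_op Z" shows "positive_op (embed_kern Z)"
  using assms unfolding positive_op_def by (simp add: kform_embed_kern ell2_slice)

lemma embed_vec_slice: "(\<lambda>a. embed_vec 0 v (a, 0)) = v" by (simp add: embed_vec_def)

lemma positive_embed_kernD: assumes "positive_op (embed_kern Z)" shows "positive_op Z"
  unfolding positive_op_def
proof (intro allI impI)
  fix v :: "'a \<Rightarrow> complex" assume "ell2 v"
  then have "0 \<le> kform (embed_kern Z) (embed_vec 0 v) (embed_vec 0 v)"
    using assms ell2_embed_vec unfolding positive_op_def by blast
  then show "0 \<le> kform Z v v" by (simp add: kform_embed_kern embed_vec_slice)
qed

lemma diag_summable_embed_kern:
  "(\<lambda>p. embed_kern Z p p) summable_on UNIV \<longleftrightarrow> (\<lambda>a. Z a a) summable_on UNIV"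
proof -
  define h :: "'a \<Rightarrow> 'a \<times> nat" where "h = (\<lambda>a. (a, 0))"
  define G where "G = (\<lambda>p. embed_kern Z p p)"
  have ih: "inj h" unfolding h_def by (rule inj_pair_const)
  have supp: "G y = 0" if y: "y \<notin> range h" for y
  proof -
    obtain a k where yy: "y = (a,k)" by (cases y)
    have "k \<noteq> 0" using y yy by (auto simp: h_def)
    then show ?thesis by (simp add: yy G_def embed_kern_def)
  qed
  have eq: "(\<lambda>x. G (h x)) = (\<lambda>a. Z a a)" by (simp add: G_def h_def embed_kern_def)
  show ?thesis using infsum_reindex_support(2)[of h G, OF ih supp] eq by (simp add: G_def)
qed

lemma trace_class_embed_kern:
  assumes "trace_class Z" "positive_op Z"
  shows "trace_class (embed_kern Z)"
proof (rule trace_class_positive_op(1))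
  show "form_summable (embed_kern Z)" by (rule form_summable_embed_kern[OF trace_class_form_summable[OF assms(1)]])
  show "positive_op (embed_kern Z)" by (rule positive_embed_kern[OF assms(2)])
  show "(\<lambda>p. embed_kern Z p p) summable_on UNIV" by (simp only: diag_summable_embed_kern diag_summable(1)[OF assms(1)])
qed

lemma supported_on_embed_kern: "supported_on 1 (embed_kern Z)"
  by (auto simp: supported_on_def embed_kern_def split: prod.splits)

lemma ampl_embed_kern: "ampl 1 \<Phi> (embed_kern Z) = embed_kern (\<Phi> Z)"
proof (intro ext)
  fix p q :: "'a \<times> nat"
  obtain a k where p: "p = (a,k)" by (cases p)
  obtain b l where q: "q = (b,l)" by (cases q)
  have eqZ: "(\<lambda>a' b'. embed_kern Z (a', 0) (b', 0)) = Z" by (simp add: embed_kern_def)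
  show "ampl 1 \<Phi> (embed_kern Z) p q = embed_kern (\<Phi> Z) p q"
  proof (cases "k = 0 \<and> l = 0")
    case True
    then have "ampl 1 \<Phi> (embed_kern Z) p q = \<Phi> (\<lambda>a' b'. embed_kern Z (a', 0) (b', 0)) a b"
      unfolding p q ampl_def by simp
    also have "\<dots> = \<Phi> Z a b" by (simp only: eqZ)
    also have "\<dots> = embed_kern (\<Phi> Z) p q" using True unfolding p q embed_kern_def by simp
    finally show ?thesis .
  next
    case False
    then have "ampl 1 \<Phi> (embed_kern Z) p q = 0" unfolding p q ampl_def by auto
    moreover have "embed_kern (\<Phi> Z) p q = 0" using False unfolding p q embed_kern_def by auto
    ultimately show ?thesis by simp
  qed
qed


section \<open>Measure-and-prepare instruments\<close>

definition positive_map :: "('x kern \<Rightarrow> 'x kern) \<Rightarrow> bool" where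
  "positive_map \<Phi> \<longleftrightarrow> (\<forall>Y. trace_class Y \<and> positive_op Y \<longrightarrow> positive_op (\<Phi> Y))"

lemma completely_positive_imp_positive_map:
  fixes \<Phi> :: "'x kern \<Rightarrow> 'x kern"
  assumes "completely_positive \<Phi>"
  shows "positive_map \<Phi>"
  unfolding positive_map_def
proof (intro allI impI)
  fix Y :: "'x kern" assume Y: "trace_class Y \<and> positive_op Y"
  then have "positive_op (ampl 1 \<Phi> (embed_kern Y))"
    using assms supported_on_embed_kern[of Y]
    unfolding completely_positive_def by (blast intro: trace_class_embed_kern positive_embed_kern)
  then show "positive_op (\<Phi> Y)" unfolding ampl_embed_kern by (rule positive_embed_kernD)
qed

definition compression :: "nat \<Rightarrow> (nat \<Rightarrow> complex) \<Rightarrow> ('x \<times> nat) kern \<Rightarrow> 'x kern" where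
  "compression n c X = (\<lambda>a b. \<Sum>kl\<in>{..<n} \<times> {..<n}. (cnj (c (fst kl)) * c (snd kl)) * block (fst kl) (snd kl) X a b)"

lemma trace_class_compression:
  assumes "trace_class X"
  shows "trace_class (compression n c X)"
  unfolding compression_def by (rule trace_class_sum) (auto intro: trace_class_block assms)

text \<open>The form of the compression at w is the form of X at the block vector with blocks c k * w.\<close>

lemma positive_op_compression:
  fixes X :: "('x \<times> nat) kern"
  assumes X: "trace_class X" "positive_op X"
  shows "positive_op (compression n c X)"
  unfolding positive_op_def
proof (intro allI impI)
  fix w :: "'x \<Rightarrow> complex" assume w: "ell2 w"
  define V where "V = (\<lambda>q. \<Sum>k<n. c k * embed_vec k w q)"
  have eV: "ell2 V" unfolding V_def by (rule ell2_sum) (auto intro: ell2_embed_vec w)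
  have aX: "form_summable X" by (rule trace_class_form_summable[OF X(1)])
  have kV: "kform X (embed_vec k w) V = (\<Sum>l<n. c l * kform X (embed_vec k w) (embed_vec l w))" for k
    unfolding V_def by (rule kform_sum_right) (auto intro: aX ell2_embed_vec w)
  have VV: "kform X V V = (\<Sum>k<n. cnj (c k) * kform X (embed_vec k w) V)"
    by (subst (1) V_def, rule kform_sum_left) (auto intro: aX eV ell2_embed_vec w)
  have "kform (compression n c X) w w
      = (\<Sum>kl\<in>{..<n} \<times> {..<n}. (cnj (c (fst kl)) * c (snd kl)) * kform (block (fst kl) (snd kl) X) w w)"
    unfolding compression_def
    by (rule kform_kernel_sum) (auto intro: trace_class_form_summable trace_class_block X(1) w)
  also have "\<dots> = (\<Sum>k<n. \<Sum>l<n. (cnj (c k) * c l) * kform X (embed_vec k w) (embed_vec l w))"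
    by (simp only: kform_embed_vec sum.cartesian_product case_prod_unfold fst_conv snd_conv)
  also have "\<dots> = (\<Sum>k<n. cnj (c k) * kform X (embed_vec k w) V)"
    by (intro sum.cong refl) (simp only: kV sum_distrib_left mult.assoc)
  also have "\<dots> = kform X V V" by (rule VV[symmetric])
  finally show "0 \<le> kform (compression n c X) w w" using X(2) eV by (simp add: positive_op_def)
qed

definition basis_state :: "'x \<Rightarrow> 'x kern" where
  "basis_state x0 = (\<lambda>a b. if a = x0 \<and> b = x0 then 1 else 0)"

lemma form_summable_basis_state: "form_summable (basis_state x0)"
  by (rule form_summable_finite_support[of "{x0}"]) (auto simp: basis_state_def)

lemma positive_op_basis_state: "positive_op (basis_state x0)"
  unfolding positive_op_def
proof (intro allI impI)
  fix v :: "'a \<Rightarrow> complex"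
  have "kform (basis_state x0) v v = (\<Sum>a\<in>{x0}. \<Sum>b\<in>{x0}. cnj (v a) * basis_state x0 a b * v b)"
    by (rule kform_finite_support) (auto simp: basis_state_def)
  also have "\<dots> = v x0 * cnj (v x0)" by (simp add: basis_state_def mult.commute)
  also have "\<dots> = complex_of_real ((cmod (v x0))\<^sup>2)" by (rule complex_norm_square[symmetric])
  finally show "0 \<le> kform (basis_state x0) v v" by (simp add: complex_nonneg_iff)
qed

lemma tr_basis_state: "tr (basis_state x0) = 1"
proof -
  have "tr (basis_state x0) = (\<Sum>a\<in>{x0}. basis_state x0 a a)"
    unfolding tr_def by (rule infsum_finite_support(1)) (auto simp: basis_state_def)
  then show ?thesis by (simp add: basis_state_def)
qed

lemma trace_class_basis_state: "trace_class (basis_state x0)"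
  and trnorm_basis_state: "trnorm (basis_state x0) \<le> 1"
proof -
  have "(\<lambda>a. basis_state x0 a a) summable_on UNIV"
    by (rule infsum_finite_support(2)[of "{x0}"]) (auto simp: basis_state_def)
  note pos = trace_class_positive_op[OF form_summable_basis_state positive_op_basis_state this]
  show "trace_class (basis_state x0)" by (fact pos(1))
  show "trnorm (basis_state x0) \<le> 1" using pos(2) by (simp add: tr_basis_state)
qed

lemma tr_scale: "tr (\<lambda>a b. c * X a b) = c * tr X"
  unfolding tr_def by (rule infsum_cmult_right')

definition tc_positive_functional :: "('x kern \<Rightarrow> complex) \<Rightarrow> bool" where
  "tc_positive_functional P \<longleftrightarrow>
    (\<forall>X Y \<alpha> \<beta>. trace_class X \<and> trace_class Y \<longrightarrow> P (\<lambda>a b. \<alpha> * X a b + \<beta> * Y a b) = \<alpha> * P X + \<beta> * P Y) \<and>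
    (\<exists>C. \<forall>Y. trace_class Y \<longrightarrow> cmod (P Y) \<le> C * trnorm Y) \<and>
    (\<forall>Y. trace_class Y \<and> positive_op Y \<longrightarrow> 0 \<le> P Y)"

lemma tc_positive_functionalD:
  assumes "tc_positive_functional P"
  shows "\<And>X Y \<alpha> \<beta>. trace_class X \<Longrightarrow> trace_class Y \<Longrightarrow> P (\<lambda>a b. \<alpha> * X a b + \<beta> * Y a b) = \<alpha> * P X + \<beta> * P Y"
    and "\<exists>C. \<forall>Y. trace_class Y \<longrightarrow> cmod (P Y) \<le> C * trnorm Y"
    and "\<And>Y. trace_class Y \<Longrightarrow> positive_op Y \<Longrightarrow> 0 \<le> P Y"
  using assms unfolding tc_positive_functional_def by blast+

lemma tc_bounded_linearD:
  assumes "tc_bounded_linear \<Phi>"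
  shows "\<And>X. trace_class X \<Longrightarrow> trace_class (\<Phi> X)"
    and "\<And>X Y a b. trace_class X \<Longrightarrow> trace_class Y \<Longrightarrow> \<Phi> (\<lambda>x y. a * X x y + b * Y x y) = (\<lambda>x y. a * \<Phi> X x y + b * \<Phi> Y x y)"
    and "\<exists>C. \<forall>X. trace_class X \<longrightarrow> trnorm (\<Phi> X) \<le> C * trnorm X"
  using assms unfolding tc_bounded_linear_def by blast+

lemma tc_bounded_linear_scale:
  assumes "tc_bounded_linear \<Phi>" "trace_class X"
  shows "\<Phi> (\<lambda>a b. c * X a b) = (\<lambda>a b. c * \<Phi> X a b)"
  using tc_bounded_linearD(2)[OF assms(1,2,2), of c 0] by simp

lemma tc_positive_functional_sum:
  fixes X :: "'i \<Rightarrow> 'x kern"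
  assumes P: "tc_positive_functional P" and "finite I" "\<And>i. i \<in> I \<Longrightarrow> trace_class (X i)"
  shows "P (\<lambda>a b. \<Sum>i\<in>I. c i * X i a b) = (\<Sum>i\<in>I. c i * P (X i))"
  using assms(2,3)
proof (induction I rule: finite_induct)
  case empty
  show ?case
    using tc_positive_functionalD(1)[OF P trace_class_zero trace_class_zero, of 0 0] by simp
next
  case (insert x F)
  have "trace_class (\<lambda>a b. \<Sum>i\<in>F. c i * X i a b)" using insert by (intro trace_class_sum) auto
  then have "P (\<lambda>a b. c x * X x a b + 1 * (\<Sum>i\<in>F. c i * X i a b))
      = c x * P (X x) + 1 * P (\<lambda>a b. \<Sum>i\<in>F. c i * X i a b)"
    using insert by (intro tc_positive_functionalD(1)[OF P]) auto
  then show ?case using insert by simp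
qed

lemma tc_positive_functional_tr:
  assumes "tc_bounded_linear \<Phi>" "positive_map \<Phi>"
  shows "tc_positive_functional (\<lambda>Y. tr (\<Phi> Y))"
  unfolding tc_positive_functional_def
proof (intro conjI allI impI)
  note tc = tc_bounded_linearD[OF assms(1)]
  fix X Y :: "'a kern" and \<alpha> \<beta> :: complex assume XY: "trace_class X \<and> trace_class Y"
  then have "\<Phi> (\<lambda>a b. \<alpha> * X a b + \<beta> * Y a b) = (\<lambda>a b. \<alpha> * \<Phi> X a b + \<beta> * \<Phi> Y a b)"
    by (intro tc(2)) simp_all
  then show "tr (\<Phi> (\<lambda>a b. \<alpha> * X a b + \<beta> * Y a b)) = \<alpha> * tr (\<Phi> X) + \<beta> * tr (\<Phi> Y)"
    using XY by (simp add: tr_lin[OF tc(1)[of X] tc(1)[of Y]])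
next
  note tc = tc_bounded_linearD[OF assms(1)]
  obtain C where C: "\<And>X. trace_class X \<Longrightarrow> trnorm (\<Phi> X) \<le> C * trnorm X"
    using tc(3) by blast
  show "\<exists>C. \<forall>Y. trace_class Y \<longrightarrow> cmod (tr (\<Phi> Y)) \<le> C * trnorm Y"
    by (intro exI[of _ C] allI impI order_trans[OF tr_le_trnorm[OF tc(1)] C])
next
  fix Y :: "'a kern" assume "trace_class Y \<and> positive_op Y"
  then show "0 \<le> tr (\<Phi> Y)"
    using assms(2) unfolding positive_map_def by (intro tr_nonneg tc_bounded_linearD(1)[OF assms(1)]) auto
qed

lemma tc_positive_functional_comp:
  assumes P: "tc_positive_functional P" and \<Phi>: "tc_bounded_linear \<Phi>" "positive_map \<Phi>"
  shows "tc_positive_functional (\<lambda>Y. P (\<Phi> Y))"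
  unfolding tc_positive_functional_def
proof (intro conjI allI impI)
  note tc = tc_bounded_linearD[OF \<Phi>(1)]
  fix X Y :: "'a kern" and \<alpha> \<beta> :: complex assume XY: "trace_class X \<and> trace_class Y"
  then have "\<Phi> (\<lambda>a b. \<alpha> * X a b + \<beta> * Y a b) = (\<lambda>a b. \<alpha> * \<Phi> X a b + \<beta> * \<Phi> Y a b)"
    by (intro tc(2)) simp_all
  then show "P (\<Phi> (\<lambda>a b. \<alpha> * X a b + \<beta> * Y a b)) = \<alpha> * P (\<Phi> X) + \<beta> * P (\<Phi> Y)"
    using XY by (simp add: tc_positive_functionalD(1)[OF P tc(1)[of X] tc(1)[of Y]])
next
  note tc = tc_bounded_linearD[OF \<Phi>(1)]
  obtain C where C: "\<And>Y. trace_class Y \<Longrightarrow> cmod (P Y) \<le> C * trnorm Y"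
    using tc_positive_functionalD(2)[OF P] by blast
  obtain D where D: "\<And>X. trace_class X \<Longrightarrow> trnorm (\<Phi> X) \<le> D * trnorm X"
    using tc(3) by blast
  show "\<exists>C. \<forall>Y. trace_class Y \<longrightarrow> cmod (P (\<Phi> Y)) \<le> C * trnorm Y"
  proof (intro exI allI impI)
    fix Y :: "'a kern" assume Y: "trace_class Y"
    have "cmod (P (\<Phi> Y)) \<le> C * trnorm (\<Phi> Y)" by (rule C[OF tc(1)[OF Y]])
    also have "\<dots> \<le> max C 0 * trnorm (\<Phi> Y)"
      by (rule mult_right_mono[OF max.cobounded1 trnorm_nonneg[OF tc(1)[OF Y]]])
    also have "\<dots> \<le> max C 0 * (D * trnorm Y)" by (intro mult_left_mono D Y) simp
    finally show "cmod (P (\<Phi> Y)) \<le> (max C 0 * D) * trnorm Y" by (simp add: mult.assoc)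
  qed
next
  fix Y :: "'a kern" assume "trace_class Y \<and> positive_op Y"
  then show "0 \<le> P (\<Phi> Y)"
    using \<Phi>(2) unfolding positive_map_def
    by (intro tc_positive_functionalD(3)[OF P] tc_bounded_linearD(1)[OF \<Phi>(1)]) auto
qed

lemma tc_positive_functional_add:
  assumes P: "tc_positive_functional P" and Q: "tc_positive_functional Q"
  shows "tc_positive_functional (\<lambda>Y. P Y + Q Y)"
  unfolding tc_positive_functional_def
proof (intro conjI allI impI)
  fix X Y :: "'a kern" and \<alpha> \<beta> :: complex assume "trace_class X \<and> trace_class Y"
  then show "P (\<lambda>a b. \<alpha> * X a b + \<beta> * Y a b) + Q (\<lambda>a b. \<alpha> * X a b + \<beta> * Y a b) = \<alpha> * (P X + Q X) + \<beta> * (P Y + Q Y)"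
    by (simp only: tc_positive_functionalD(1)[OF P] tc_positive_functionalD(1)[OF Q] distrib_left add_ac)
next
  obtain C1 where C1: "\<forall>Y. trace_class Y \<longrightarrow> cmod (P Y) \<le> C1 * trnorm Y"
    using tc_positive_functionalD(2)[OF P] by blast
  obtain C2 where C2: "\<forall>Y. trace_class Y \<longrightarrow> cmod (Q Y) \<le> C2 * trnorm Y"
    using tc_positive_functionalD(2)[OF Q] by blast
  show "\<exists>C. \<forall>Y. trace_class Y \<longrightarrow> cmod (P Y + Q Y) \<le> C * trnorm Y"
  proof (intro exI[of _ "C1 + C2"] allI impI)
    fix Y :: "'a kern" assume Y: "trace_class Y"
    have "cmod (P Y + Q Y) \<le> cmod (P Y) + cmod (Q Y)" by (rule norm_triangle_ineq)
    also have "\<dots> \<le> C1 * trnorm Y + C2 * trnorm Y" using C1 C2 Y by (intro add_mono) auto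
    finally show "cmod (P Y + Q Y) \<le> (C1 + C2) * trnorm Y" by (simp add: distrib_right)
  qed
next
  fix Y :: "'a kern" assume "trace_class Y \<and> positive_op Y"
  then show "0 \<le> P Y + Q Y"
    by (simp add: tc_positive_functionalD(3)[OF P] tc_positive_functionalD(3)[OF Q])
qed

definition measure_prepare :: "'x \<Rightarrow> ('x kern \<Rightarrow> complex) \<Rightarrow> 'x kern \<Rightarrow> 'x kern" where
  "measure_prepare x0 P Y = (\<lambda>a b. P Y * basis_state x0 a b)"

lemma tr_measure_prepare: "tr (measure_prepare x0 P Y) = P Y"
  by (simp add: measure_prepare_def tr_scale tr_basis_state)

lemma tc_bounded_linear_measure_prepare:
  assumes P: "tc_positive_functional P"
  shows "tc_bounded_linear (measure_prepare x0 P)"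
  unfolding tc_bounded_linear_def
proof (intro conjI allI impI)
  fix X :: "'a kern"
  show "trace_class (measure_prepare x0 P X)"
    unfolding measure_prepare_def by (rule trace_class_scale[OF trace_class_basis_state])
next
  fix X Y :: "'a kern" and \<alpha> \<beta> :: complex assume "trace_class X \<and> trace_class Y"
  then show "measure_prepare x0 P (\<lambda>x y. \<alpha> * X x y + \<beta> * Y x y)
      = (\<lambda>x y. \<alpha> * measure_prepare x0 P X x y + \<beta> * measure_prepare x0 P Y x y)"
    unfolding measure_prepare_def by (simp add: tc_positive_functionalD(1)[OF P] algebra_simps)
next
  obtain C where C: "\<And>Y. trace_class Y \<Longrightarrow> cmod (P Y) \<le> C * trnorm Y"
    using tc_positive_functionalD(2)[OF P] by blast
  show "\<exists>C. \<forall>X. trace_class X \<longrightarrow> trnorm (measure_prepare x0 P X) \<le> C * trnorm X"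
  proof (intro exI allI impI)
    fix X :: "'a kern" assume X: "trace_class X"
    have "trnorm (measure_prepare x0 P X) \<le> cmod (P X) * trnorm (basis_state x0)"
      unfolding measure_prepare_def by (rule trnorm_scale[OF trace_class_basis_state])
    also have "\<dots> \<le> cmod (P X)" by (rule mult_left_le[OF trnorm_basis_state]) simp
    also have "\<dots> \<le> C * trnorm X" by (rule C[OF X])
    finally show "trnorm (measure_prepare x0 P X) \<le> C * trnorm X" .
  qed
qed

lemma sum_singleton_Times:
  "sum g ({x0} \<times> {..<n}) = (\<Sum>k<n. g (x0, k))"
proof -
  have "{x0} \<times> {..<n} = (\<lambda>k. (x0, k)) ` {..<n}" by auto
  moreover have "inj_on (\<lambda>k. (x0, k)) {..<n}" by (auto simp: inj_on_def)
  ultimately show ?thesis by (simp add: sum.reindex)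
qed

text \<open>The amplified form at v is P applied to the compression of X along c k = v (x0, k).\<close>

lemma completely_positive_measure_prepare:
  assumes P: "tc_positive_functional P"
  shows "completely_positive (measure_prepare x0 P)"
  unfolding completely_positive_def
proof (intro allI impI)
  fix n :: nat and X :: "('a \<times> nat) kern"
  assume X: "trace_class X \<and> supported_on n X \<and> positive_op X"
  show "positive_op (ampl n (measure_prepare x0 P) X)"
    unfolding positive_op_def
  proof (intro allI impI)
    fix v :: "'a \<times> nat \<Rightarrow> complex"
    define G where "G = {x0} \<times> {..<n}"
    define c where "c k = v (x0, k)" for k
    define K where "K = ampl n (measure_prepare x0 P) X"
    have K: "K (a,k) (b,l) = (if k < n \<and> l < n then P (block k l X) * basis_state x0 a b else 0)" for a b k l
      by (simp add: K_def ampl_def measure_prepare_def block_def)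
    have K_outside: "K p q = 0" if "p \<notin> G \<or> q \<notin> G" for p q
      using that by (cases p, cases q) (auto simp: G_def K basis_state_def)
    have "kform K v v = (\<Sum>p\<in>G. \<Sum>q\<in>G. cnj (v p) * K p q * v q)"
      by (rule kform_finite_support) (auto simp: G_def K_outside)
    also have "\<dots> = (\<Sum>k<n. \<Sum>l<n. (cnj (c k) * c l) * P (block k l X))"
      unfolding G_def sum_singleton_Times by (intro sum.cong refl) (simp add: K basis_state_def c_def)
    also have "\<dots> = P (compression n c X)"
      unfolding compression_def
      by (subst tc_positive_functional_sum[OF P])
         (auto intro: trace_class_block X[THEN conjunct1] simp: sum.cartesian_product case_prod_unfold)
    finally show "0 \<le> kform (ampl n (measure_prepare x0 P) X) v v"
      using X by (simp add: K_def tc_positive_functionalD(3)[OF P]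
          trace_class_compression positive_op_compression)
  qed
qed

lemma instrumentD:
  assumes "instrument \<Omega> \<K>"
  shows "countable \<Omega>"
    and "\<And>\<omega>. \<omega> \<in> \<Omega> \<Longrightarrow> tc_bounded_linear (\<K> \<omega>)"
    and "\<And>\<omega>. \<omega> \<in> \<Omega> \<Longrightarrow> completely_positive (\<K> \<omega>)"
    and "\<And>r. trace_class r \<Longrightarrow> \<exists>S. trace_class S \<and> tn_has_sum (\<lambda>\<omega>. \<K> \<omega> r) \<Omega> S \<and> tr S = tr r"
  using assms unfolding instrument_def by blast+

lemma tn_has_sum_basis_state:
  assumes "(p has_sum s) \<Omega>"
  shows "tn_has_sum (\<lambda>\<omega> a b. p \<omega> * basis_state x0 a b) \<Omega> (\<lambda>a b. s * basis_state x0 a b)"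
  unfolding tn_has_sum_def
proof (intro allI impI)
  fix e :: real assume "e > 0"
  then have "eventually (\<lambda>G. dist (sum p G) s < e) (finite_subsets_at_top \<Omega>)"
    using assms unfolding has_sum_def tendsto_iff by blast
  then obtain F0 where F0: "finite F0" "F0 \<subseteq> \<Omega>"
    and close: "\<And>G. finite G \<and> F0 \<subseteq> G \<and> G \<subseteq> \<Omega> \<Longrightarrow> dist (sum p G) s < e"
    unfolding eventually_finite_subsets_at_top by blast
  show "\<exists>F0. finite F0 \<and> F0 \<subseteq> \<Omega> \<and> (\<forall>G. finite G \<and> F0 \<subseteq> G \<and> G \<subseteq> \<Omega> \<longrightarrow>
      trnorm (\<lambda>a b. (\<Sum>\<omega>\<in>G. p \<omega> * basis_state x0 a b) - s * basis_state x0 a b) < e)"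
  proof (intro exI conjI allI impI)
    fix G assume G: "finite G \<and> F0 \<subseteq> G \<and> G \<subseteq> \<Omega>"
    have "(\<lambda>a b. (\<Sum>\<omega>\<in>G. p \<omega> * basis_state x0 a b) - s * basis_state x0 a b)
        = (\<lambda>a b. (sum p G - s) * basis_state x0 a b)"
      by (simp add: sum_distrib_right left_diff_distrib)
    then have "trnorm (\<lambda>a b. (\<Sum>\<omega>\<in>G. p \<omega> * basis_state x0 a b) - s * basis_state x0 a b)
        \<le> cmod (sum p G - s) * trnorm (basis_state x0)"
      using trnorm_scale[OF trace_class_basis_state] by simp
    also have "\<dots> \<le> cmod (sum p G - s)" by (rule mult_left_le[OF trnorm_basis_state]) simp
    also have "\<dots> < e" using close[OF G] by (simp add: dist_norm)
    finally show "trnorm (\<lambda>a b. (\<Sum>\<omega>\<in>G. p \<omega> * basis_state x0 a b) - s * basis_state x0 a b) < e" .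
  qed (use F0 in auto)
qed

lemma instrument_measure_prepare:
  fixes P :: "'o \<Rightarrow> 'x kern \<Rightarrow> complex"
  assumes "countable \<Omega>" and P: "\<And>\<omega>. \<omega> \<in> \<Omega> \<Longrightarrow> tc_positive_functional (P \<omega>)"
    and sums: "\<And>r. trace_class r \<Longrightarrow> ((\<lambda>\<omega>. P \<omega> r) has_sum tr r) \<Omega>"
  shows "instrument \<Omega> (\<lambda>\<omega>. measure_prepare x0 (P \<omega>))"
  unfolding instrument_def
proof (intro conjI ballI allI impI)
  show "countable \<Omega>" by (fact assms(1))
next
  fix \<omega> assume "\<omega> \<in> \<Omega>"
  then show "tc_bounded_linear (measure_prepare x0 (P \<omega>))"
    by (rule tc_bounded_linear_measure_prepare[OF P])
next
  fix \<omega> assume "\<omega> \<in> \<Omega>"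
  then show "completely_positive (measure_prepare x0 (P \<omega>))"
    by (rule completely_positive_measure_prepare[OF P])
next
  fix r :: "'x kern" assume r: "trace_class r"
  show "\<exists>S. trace_class S \<and> tn_has_sum (\<lambda>\<omega>. measure_prepare x0 (P \<omega>) r) \<Omega> S \<and> tr S = tr r"
  proof (intro exI conjI)
    show "trace_class (\<lambda>a b. tr r * basis_state x0 a b)"
      by (rule trace_class_scale[OF trace_class_basis_state])
    show "tr (\<lambda>a b. tr r * basis_state x0 a b) = tr r" by (simp add: tr_scale tr_basis_state)
    show "tn_has_sum (\<lambda>\<omega>. measure_prepare x0 (P \<omega>) r) \<Omega> (\<lambda>a b. tr r * basis_state x0 a b)"
      unfolding measure_prepare_def by (rule tn_has_sum_basis_state[OF sums[OF r]])
  qed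
qed

lemma instrument_tr_has_sum:
  assumes inst: "instrument \<Omega> \<K>" and r: "trace_class r"
  shows "((\<lambda>\<omega>. tr (\<K> \<omega> r)) has_sum tr r) \<Omega>"
  unfolding has_sum_def tendsto_iff
proof (intro allI impI)
  fix e :: real assume e: "e > 0"
  obtain S where S: "trace_class S" "tn_has_sum (\<lambda>\<omega>. \<K> \<omega> r) \<Omega> S" "tr S = tr r"
    using instrumentD(4)[OF inst r] by blast
  obtain F0 where F0: "finite F0" "F0 \<subseteq> \<Omega>"
    and close: "\<And>G. finite G \<Longrightarrow> F0 \<subseteq> G \<Longrightarrow> G \<subseteq> \<Omega> \<Longrightarrow>
       trnorm (\<lambda>a b. (\<Sum>\<omega>\<in>G. \<K> \<omega> r a b) - S a b) < e"
    using S(2) e unfolding tn_has_sum_def by meson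
  have tcK: "\<And>\<omega>. \<omega> \<in> \<Omega> \<Longrightarrow> trace_class (\<K> \<omega> r)"
    by (rule tc_bounded_linearD(1)[OF instrumentD(2)[OF inst] r])
  show "eventually (\<lambda>G. dist (\<Sum>\<omega>\<in>G. tr (\<K> \<omega> r)) (tr r) < e) (finite_subsets_at_top \<Omega>)"
    unfolding eventually_finite_subsets_at_top
  proof (intro exI conjI allI impI)
    fix G assume G: "finite G \<and> F0 \<subseteq> G \<and> G \<subseteq> \<Omega>"
    have tcG: "\<And>\<omega>. \<omega> \<in> G \<Longrightarrow> trace_class (\<K> \<omega> r)" using G tcK by blast
    have tsum: "trace_class (\<lambda>a b. \<Sum>\<omega>\<in>G. 1 * \<K> \<omega> r a b)"
      by (rule trace_class_sum) (use G tcG in auto)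
    have D: "(\<lambda>a b. (\<Sum>\<omega>\<in>G. \<K> \<omega> r a b) - S a b) = (\<lambda>a b. 1 * (\<Sum>\<omega>\<in>G. 1 * \<K> \<omega> r a b) + (-1) * S a b)"
      by simp
    have "tr (\<lambda>a b. (\<Sum>\<omega>\<in>G. \<K> \<omega> r a b) - S a b) = 1 * tr (\<lambda>a b. \<Sum>\<omega>\<in>G. 1 * \<K> \<omega> r a b) + (-1) * tr S"
      unfolding D by (rule tr_lin[OF tsum S(1)])
    also have "tr (\<lambda>a b. \<Sum>\<omega>\<in>G. 1 * \<K> \<omega> r a b) = (\<Sum>\<omega>\<in>G. 1 * tr (\<K> \<omega> r))"
      by (rule tr_sum) (use G tcG in auto)
    finally have "tr (\<lambda>a b. (\<Sum>\<omega>\<in>G. \<K> \<omega> r a b) - S a b) = (\<Sum>\<omega>\<in>G. tr (\<K> \<omega> r)) - tr r"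
      using S(3) by simp
    then have "dist (\<Sum>\<omega>\<in>G. tr (\<K> \<omega> r)) (tr r) = cmod (tr (\<lambda>a b. (\<Sum>\<omega>\<in>G. \<K> \<omega> r a b) - S a b))"
      by (simp add: dist_norm)
    also have "\<dots> \<le> trnorm (\<lambda>a b. (\<Sum>\<omega>\<in>G. \<K> \<omega> r a b) - S a b)"
      unfolding D by (rule tr_le_trnorm[OF trace_class_lin(1)[OF tsum S(1)]])
    also have "\<dots> < e" using close G by blast
    finally show "dist (\<Sum>\<omega>\<in>G. tr (\<K> \<omega> r)) (tr r) < e" .
  qed (use F0 in auto)
qed

lemma instrument_tr_nonneg:
  assumes "instrument \<Omega> \<K>" "\<omega> \<in> \<Omega>" "trace_class Y" "positive_op Y"
  shows "0 \<le> tr (\<K> \<omega> Y)"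
  using completely_positive_imp_positive_map[OF instrumentD(3)[OF assms(1,2)]] assms(3,4)
  unfolding positive_map_def by (intro tr_nonneg tc_bounded_linearD(1)[OF instrumentD(2)[OF assms(1,2)]]) auto

lemma instrument_Re_tr_le_one:
  assumes "instrument \<Omega> \<K>" "\<omega> \<in> \<Omega>" "density_op \<rho>"
  shows "Re (tr (\<K> \<omega> \<rho>)) \<le> 1"
proof -
  have \<rho>: "trace_class \<rho>" "positive_op \<rho>" "tr \<rho> = 1" using assms(3) by (auto simp: density_op_def)
  have "(\<Sum>\<omega>'\<in>{\<omega>}. Re (tr (\<K> \<omega>' \<rho>))) \<le> Re (tr \<rho>)"
  proof (rule finite_sum_le_has_sum[OF has_sum_Re[OF instrument_tr_has_sum[OF assms(1) \<rho>(1)]]])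
    fix \<omega>' assume "\<omega>' \<in> \<Omega> - {\<omega>}"
    then show "0 \<le> Re (tr (\<K> \<omega>' \<rho>))"
      using instrument_tr_nonneg[OF assms(1) _ \<rho>(1,2)] by (simp add: complex_nonneg_iff)
  qed (use assms(2) in auto)
  then show ?thesis using \<rho>(3) by simp
qed

section \<open>Following up the inconclusive outcome\<close>

text \<open>Run \<open>\<I>\<close>; on the inconclusive outcome run \<open>\<J>\<close> on the resulting state. Only the outcome
  probabilities matter for discrimination, so every outcome prepares one fixed state.\<close>

definition followup_prob :: "('j option \<Rightarrow> 'x kern \<Rightarrow> 'x kern) \<Rightarrow> ('j option \<Rightarrow> 'x kern \<Rightarrow> 'x kern)
    \<Rightarrow> 'j option \<Rightarrow> 'x kern \<Rightarrow> complex" where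
  "followup_prob \<I> \<J> \<omega> Y =
     (case \<omega> of None \<Rightarrow> 0 | Some j \<Rightarrow> tr (\<I> (Some j) Y)) + tr (\<J> \<omega> (\<I> None Y))"

definition followup :: "('j option \<Rightarrow> 'x kern \<Rightarrow> 'x kern) \<Rightarrow> ('j option \<Rightarrow> 'x kern \<Rightarrow> 'x kern)
    \<Rightarrow> 'j option \<Rightarrow> 'x kern \<Rightarrow> 'x kern" where
  "followup \<I> \<J> \<omega> = measure_prepare undefined (followup_prob \<I> \<J> \<omega>)"

lemma tc_positive_functional_followup_prob:
  assumes \<I>: "instrument \<Omega> \<I>" and \<J>: "instrument \<Omega> \<J>" and "None \<in> \<Omega>" "\<omega> \<in> \<Omega>"
  shows "tc_positive_functional (followup_prob \<I> \<J> \<omega>)"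
proof -
  have tr_map: "tc_positive_functional (\<lambda>Y. tr (\<K> \<omega>' Y))"
    if "instrument \<Omega> \<K>" "\<omega>' \<in> \<Omega>" for \<K> :: "'a option \<Rightarrow> 'b kern \<Rightarrow> 'b kern" and \<omega>'
    using that by (intro tc_positive_functional_tr instrumentD(2) completely_positive_imp_positive_map
        instrumentD(3))
  have "tc_positive_functional (\<lambda>Y. case \<omega> of None \<Rightarrow> 0 | Some j \<Rightarrow> tr (\<I> (Some j) Y))"
  proof (cases \<omega>)
    case None
    then show ?thesis by (auto simp: tc_positive_functional_def intro: exI[of _ 0])
  next
    case (Some j)
    then show ?thesis using tr_map[OF \<I> assms(4)] by simp
  qed
  moreover have "tc_positive_functional (\<lambda>Y. tr (\<J> \<omega> (\<I> None Y)))"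
    using tc_positive_functional_comp[OF tr_map[OF \<J> assms(4)] instrumentD(2)[OF \<I> assms(3)]
        completely_positive_imp_positive_map[OF instrumentD(3)[OF \<I> assms(3)]]] .
  ultimately show ?thesis
    unfolding followup_prob_def[abs_def] by (rule tc_positive_functional_add)
qed

lemma followup_prob_has_sum:
  assumes \<I>: "instrument \<Omega> \<I>" and \<J>: "instrument \<Omega> \<J>" and None: "None \<in> \<Omega>" and r: "trace_class r"
  shows "((\<lambda>\<omega>. followup_prob \<I> \<J> \<omega> r) has_sum tr r) \<Omega>"
proof -
  have "trace_class (\<I> None r)" by (rule tc_bounded_linearD(1)[OF instrumentD(2)[OF \<I> None] r])
  note inconclusive = instrument_tr_has_sum[OF \<J> this]
  have "((\<lambda>\<omega>. if \<omega> = None then tr (\<I> None r) else 0) has_sum tr (\<I> None r)) \<Omega>"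
    by (rule has_sum_finite_neutralI[of "{None}"]) (auto simp: None)
  from has_sum_add[OF has_sum_add[OF instrument_tr_has_sum[OF \<I> r] has_sum_uminusI[OF this]] inconclusive]
  have "((\<lambda>\<omega>. tr (\<I> \<omega> r) + - (if \<omega> = None then tr (\<I> None r) else 0) + tr (\<J> \<omega> (\<I> None r)))
      has_sum (tr r + - tr (\<I> None r) + tr (\<I> None r))) \<Omega>" .
  moreover have "(\<lambda>\<omega>. tr (\<I> \<omega> r) + - (if \<omega> = None then tr (\<I> None r) else 0) + tr (\<J> \<omega> (\<I> None r)))
      = (\<lambda>\<omega>. followup_prob \<I> \<J> \<omega> r)"
    by (rule ext) (simp add: followup_prob_def split: option.split)
  ultimately show ?thesis by simp
qed

lemma instrument_followup:
  assumes "instrument \<Omega> \<I>" "instrument \<Omega> \<J>" "None \<in> \<Omega>"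
  shows "instrument \<Omega> (followup \<I> \<J>)"
  unfolding followup_def[abs_def]
  by (rule instrument_measure_prepare[OF instrumentD(1)[OF assms(1)]
        tc_positive_functional_followup_prob[OF assms] followup_prob_has_sum[OF assms]])

lemma tr_followup_Some:
  assumes "tc_bounded_linear (\<J> (Some j))" "trace_class (\<I> None Y)" "tr (\<I> None Y) \<noteq> 0"
  shows "tr (followup \<I> \<J> (Some j) Y)
    = tr (\<I> (Some j) Y) + tr (\<I> None Y) * tr (\<J> (Some j) (\<lambda>a b. \<I> None Y a b / tr (\<I> None Y)))"
proof -
  define t where "t = tr (\<I> None Y)"
  have eq: "\<I> None Y = (\<lambda>a b. t * (inverse t * \<I> None Y a b))"
    using assms(3) by (simp add: t_def field_simps)
  have "\<J> (Some j) (\<lambda>a b. t * (inverse t * \<I> None Y a b))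
      = (\<lambda>a b. t * \<J> (Some j) (\<lambda>a b. inverse t * \<I> None Y a b) a b)"
    by (rule tc_bounded_linear_scale[OF assms(1) trace_class_scale[OF assms(2)]])
  from this[folded eq] have "tr (\<J> (Some j) (\<I> None Y)) = t * tr (\<J> (Some j) (\<lambda>a b. \<I> None Y a b / t))"
    by (simp add: tr_scale divide_inverse mult.commute)
  then show ?thesis by (simp add: followup_def tr_measure_prepare followup_prob_def t_def)
qed

section \<open>Unambiguous discrimination\<close>

lemma unamb_discrD:
  assumes "unamb_discr J \<rho> \<I>"
  shows "instrument (insert None (Some ` J)) \<I>"
    and "\<And>j k. j \<in> J \<Longrightarrow> k \<in> J \<Longrightarrow> j \<noteq> k \<Longrightarrow> tr (\<I> (Some j) (\<rho> k)) = 0"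
    and "\<And>j. j \<in> J \<Longrightarrow> 0 < tr (\<I> (Some j) (\<rho> j))"
  using assms unfolding unamb_discr_def by blast+

lemma evaluation_functionD:
  assumes "evaluation_function J f" "x \<in> PiE J (\<lambda>_. {0<..1})" "y \<in> PiE J (\<lambda>_. {0<..1})"
    and "\<And>j. j \<in> J \<Longrightarrow> y j < x j"
  shows "f y < f x"
  using assms unfolding evaluation_function_def by blast

lemma success_probs_in_unit_cube:
  assumes "unamb_discr J \<rho> \<I>" "\<forall>j\<in>J. density_op (\<rho> j)"
  shows "success_probs J \<rho> \<I> \<in> PiE J (\<lambda>_. {0<..1})"
  unfolding success_probs_def restrict_PiE_iff
proof
  fix j assume j: "j \<in> J"
  have "0 < Re (tr (\<I> (Some j) (\<rho> j)))"
    using unamb_discrD(3)[OF assms(1) j] by (simp add: less_complex_def)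
  moreover have "Re (tr (\<I> (Some j) (\<rho> j))) \<le> 1"
    using j assms(2) by (intro instrument_Re_tr_le_one[OF unamb_discrD(1)[OF assms(1)]]) auto
  ultimately show "Re (tr (\<I> (Some j) (\<rho> j))) \<in> {0<..1}" by simp
qed

lemma unamb_discr_tr_success_inconclusive:
  assumes "unamb_discr J \<rho> \<I>" "k \<in> J" "density_op (\<rho> k)"
  shows "tr (\<I> (Some k) (\<rho> k)) + tr (\<I> None (\<rho> k)) = 1"
proof -
  have \<rho>: "trace_class (\<rho> k)" "tr (\<rho> k) = 1" using assms(3) by (auto simp: density_op_def)
  have "((\<lambda>\<omega>. tr (\<I> \<omega> (\<rho> k))) has_sum (\<Sum>\<omega>\<in>{Some k, None}. tr (\<I> \<omega> (\<rho> k))))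
      (insert None (Some ` J))"
  proof (rule has_sum_finite_neutralI)
    fix \<omega> assume "\<omega> \<in> insert None (Some ` J) - {Some k, None}"
    then obtain j where "\<omega> = Some j" "j \<in> J" "j \<noteq> k" by blast
    then show "tr (\<I> \<omega> (\<rho> k)) = 0" using unamb_discrD(2)[OF assms(1) _ assms(2)] by simp
  qed (use assms(2) in auto)
  moreover have "((\<lambda>\<omega>. tr (\<I> \<omega> (\<rho> k))) has_sum tr (\<rho> k)) (insert None (Some ` J))"
    by (rule instrument_tr_has_sum[OF unamb_discrD(1)[OF assms(1)] \<rho>(1)])
  ultimately have "(\<Sum>\<omega>\<in>{Some k, None}. tr (\<I> \<omega> (\<rho> k))) = tr (\<rho> k)" by (rule has_sum_unique)
  then show ?thesis using \<rho>(2) by simp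
qed

lemma unamb_discr_tr_inconclusive_pos:
  assumes "unamb_discr J \<rho> \<I>" "k \<in> J" "density_op (\<rho> k)" "tr (\<I> (Some k) (\<rho> k)) < 1"
  shows "0 < tr (\<I> None (\<rho> k))"
proof -
  have "tr (\<I> None (\<rho> k)) = 1 - tr (\<I> (Some k) (\<rho> k))"
    using unamb_discr_tr_success_inconclusive[OF assms(1-3)] by (simp add: algebra_simps)
  then show ?thesis using assms(4) by (simp add: less_complex_def)
qed

text \<open>Each success probability grows by tr[\<I>_? \<rho>_j] times the success probability of
  \<open>\<J>\<close> on the conditioned state.\<close>

lemma followup_improves_success_probs:
  fixes \<rho> :: "'j \<Rightarrow> 'x kern"
  assumes \<I>: "unamb_discr J \<rho> \<I>" and dens: "\<forall>j\<in>J. density_op (\<rho> j)"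
    and lt1: "\<forall>j\<in>J. tr (\<I> (Some j) (\<rho> j)) < 1"
    and \<J>: "unamb_discr J (\<lambda>j. (\<lambda>a b. \<I> None (\<rho> j) a b / tr (\<I> None (\<rho> j)))) \<J>"
  shows "unamb_discr J \<rho> (followup \<I> \<J>)"
    and "\<And>j. j \<in> J \<Longrightarrow> success_probs J \<rho> \<I> j < success_probs J \<rho> (followup \<I> \<J>) j"
proof -
  define \<sigma> where "\<sigma> j = (\<lambda>a b. \<I> None (\<rho> j) a b / tr (\<I> None (\<rho> j)))" for j
  note inst\<I> = unamb_discrD(1)[OF \<I>] and inst\<J> = unamb_discrD(1)[OF \<J>]
  have t_pos: "0 < tr (\<I> None (\<rho> k))" if k: "k \<in> J" for k
    using dens lt1 k by (intro unamb_discr_tr_inconclusive_pos[OF \<I> k]) auto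
  have tr_Some: "tr (followup \<I> \<J> (Some j) (\<rho> k))
      = tr (\<I> (Some j) (\<rho> k)) + tr (\<I> None (\<rho> k)) * tr (\<J> (Some j) (\<sigma> k))"
    if j: "j \<in> J" and k: "k \<in> J" for j k
  proof -
    have "tc_bounded_linear (\<J> (Some j))" using j by (intro instrumentD(2)[OF inst\<J>]) simp
    moreover have "trace_class (\<I> None (\<rho> k))"
      using dens k by (intro tc_bounded_linearD(1)[OF instrumentD(2)[OF inst\<I>]]) (auto simp: density_op_def)
    moreover have "tr (\<I> None (\<rho> k)) \<noteq> 0" using t_pos[OF k] by auto
    ultimately show ?thesis unfolding \<sigma>_def by (rule tr_followup_Some)
  qed
  have gain: "tr (\<I> (Some j) (\<rho> j)) < tr (followup \<I> \<J> (Some j) (\<rho> j))" if j: "j \<in> J" for j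
  proof -
    have "0 < tr (\<I> None (\<rho> j)) * tr (\<J> (Some j) (\<sigma> j))"
      using t_pos[OF j] unamb_discrD(3)[OF \<J> j] unfolding \<sigma>_def by (simp add: less_complex_def)
    then show ?thesis unfolding tr_Some[OF j j] by (simp add: less_complex_def)
  qed
  show "unamb_discr J \<rho> (followup \<I> \<J>)"
    unfolding unamb_discr_def
  proof (intro conjI ballI impI)
    show "instrument (insert None (Some ` J)) (followup \<I> \<J>)"
      by (rule instrument_followup[OF inst\<I> inst\<J>]) simp
    show "tr (followup \<I> \<J> (Some j) (\<rho> k)) = 0" if "j \<in> J" "k \<in> J" "j \<noteq> k" for j k
      using unamb_discrD(2)[OF \<I> that] unamb_discrD(2)[OF \<J> that]
      unfolding tr_Some[OF that(1,2)] \<sigma>_def by simp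
    show "0 < tr (followup \<I> \<J> (Some j) (\<rho> j))" if "j \<in> J" for j
      using unamb_discrD(3)[OF \<I> that] gain[OF that] by (rule order.strict_trans)
  qed
  show "success_probs J \<rho> \<I> j < success_probs J \<rho> (followup \<I> \<J>) j" if "j \<in> J" for j
    using gain[OF that] that by (simp add: success_probs_def less_complex_def)
qed

theorem mainTheorem1:
  fixes J :: "'j set"
    and \<rho> :: "'j \<Rightarrow> ('x::countable) kern"
    and f :: "('j \<Rightarrow> real) \<Rightarrow> real"
    and \<I> :: "'j option \<Rightarrow> 'x kern \<Rightarrow> 'x kern"
  assumes "countable J"
    and "\<forall>j\<in>J. density_op (\<rho> j)"
    and "evaluation_function J f"
    and "optimal_udm J \<rho> f \<I>"
    and "\<forall>j\<in>J. tr (\<I> (Some j) (\<rho> j)) < 1"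
  shows "\<not> distinguishable J (\<lambda>j. (\<lambda>a b. \<I> None (\<rho> j) a b / tr (\<I> None (\<rho> j))))"
proof
  assume "distinguishable J (\<lambda>j. (\<lambda>a b. \<I> None (\<rho> j) a b / tr (\<I> None (\<rho> j))))"
  then obtain \<J> where \<J>: "unamb_discr J (\<lambda>j. (\<lambda>a b. \<I> None (\<rho> j) a b / tr (\<I> None (\<rho> j)))) \<J>"
    unfolding distinguishable_def by blast
  have \<I>: "unamb_discr J \<rho> \<I>" using assms(4) unfolding optimal_udm_def by blast
  note better = followup_improves_success_probs[OF \<I> assms(2) assms(5) \<J>]
  have "f (success_probs J \<rho> \<I>) < f (success_probs J \<rho> (followup \<I> \<J>))"
    by (rule evaluation_functionD[OF assms(3) success_probs_in_unit_cube[OF better(1) assms(2)]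
          success_probs_in_unit_cube[OF \<I> assms(2)] better(2)])
  with better(1) assms(4) show False unfolding optimal_udm_def by blast
qed

end
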